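(* $\operatorname{Proj}^+_\mathbb{R}\le_{\mathrm{W}}\operatorname{LLPO}*\lim$.
   Context: Represented spaces: a representation of a set $X$ is a partial surjection $\delta_X:\subseteq\mathbb{N}^\mathbb{N}\to X$. For a partial multi-valued function $f:\subseteq X\rightrightarrows Y$, a realizer is a partial $F:\subseteq\mathbb{N}^\mathbb{N}\to\mathbb{N}^\mathbb{N}$ with $\delta_Y(F(p))\in f(\delta_X(p))$ for all $p$ with $\delta_X(p)\in\mathrm{dom}(f)$. Weihrauch reducibility: $f\le_{\mathrm{W}} g$ iff there are computable partial $H:\subseteq\mathbb{N}^\mathbb{N}\times\mathbb{N}^\mathbb{N}\to\mathbb{N}^\mathbb{N}$ and $K:\subseteq\mathbb{N}^\mathbb{N}\to\mathbb{N}^\mathbb{N}$ such that $p\mapsto H(p,G(K(p)))$ is a realizer of $f$ for every realizer $G$ of $g$. The compositional product $g*f$ is the Weihrauch degree which is the maximum (it exists) of the degrees of $g_0\circ f_0$ over all $g_0\le_{\mathrm{W}}g$ and $f_0\le_{\mathrm{W}}f$. $\mathbb{R}$ has the Cauchy representation. $\mathcal{A}_+(\mathbb{R})$: closed subsets of $\mathbb{R}$ with positive information, a name of $A$ enumerating exactly the rational open intervals meeting $A$ (for nonempty $A$ equivalently, a sequence of reals whose closure is $A$). $\operatorname{Proj}^+_\mathbb{R}:\subseteq\mathbb{R}\times\mathcal{A}_+(\mathbb{R})\rightrightarrows\mathbb{R}$ maps $(x,A)$ with $A$ nonempty closed to the set of $y\in A$ with $|x-y|=d(x,A)$. $\operatorname{LLPO}:\subseteq\mathbb{N}^\mathbb{N}\times\mathbb{N}^\mathbb{N}\rightrightarrows\{0,1\}$: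 its domain consists of pairs $(p_0,p_1)$ such that there is at most one pair $(j,m)$ with $p_j(m)\ne0$, and $i\in\operatorname{LLPO}(p_0,p_1)$ iff $p_i=0^\mathbb{N}$. $\lim:\subseteq(\mathbb{N}^\mathbb{N})^\mathbb{N}\to\mathbb{N}^\mathbb{N}$ maps a convergent sequence in Baire space to its limit. *)

theory Defs
  imports "HOL-Analysis.Analysis" "HOL-Library.Nat_Bijection"
begin

section \<open>Partial recursive functions (Kleene style, no arity checks)\<close>

datatype recf = Zf | Sf | Pf nat | Cf recf "recf list" | Rf recf recf | Mf recf

inductive reval :: "recf \<Rightarrow> nat list \<Rightarrow> nat \<Rightarrow> bool" where
  reval_Z: "reval Zf xs 0"
| reval_S: "reval Sf (x # xs) (Suc x)"
| reval_P: "i < length xs \<Longrightarrow> reval (Pf i) xs (xs ! i)"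
| reval_C: "length ys = length gs \<Longrightarrow> (\<forall>i<length gs. reval (gs ! i) xs (ys ! i))
             \<Longrightarrow> reval f ys z \<Longrightarrow> reval (Cf f gs) xs z"
| reval_R0: "reval f xs y \<Longrightarrow> reval (Rf f g) (0 # xs) y"
| reval_RS: "reval (Rf f g) (n # xs) y \<Longrightarrow> reval g (y # n # xs) z
             \<Longrightarrow> reval (Rf f g) (Suc n # xs) z"
| reval_M: "reval f (n # xs) 0 \<Longrightarrow> (\<forall>m<n. \<exists>y. reval f (m # xs) (Suc y))
             \<Longrightarrow> reval (Mf f) xs n"

definition computable_nat :: "(nat \<Rightarrow> nat) \<Rightarrow> bool" where
  "computable_nat h \<longleftrightarrow> (\<exists>c. \<forall>n. reval c [n] (h n))"

type_synonym baire = "nat \<Rightarrow> nat"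

text \<open>The partial function on Baire space given by an associate h: the n-th output
  digit is h(<n, p[0..k)>) - 1 for the least k with a nonzero value; the function is
  defined at p iff such k exists for every n.  A partial function on Baire space is
  computable iff it is (a restriction of) some tt_apply h with h computable.\<close>
definition tt_apply :: "(nat \<Rightarrow> nat) \<Rightarrow> baire \<Rightarrow> baire option" where
  "tt_apply h p =
     (if \<forall>n. \<exists>k. h (prod_encode (n, list_encode (map p [0..<k]))) \<noteq> 0
      then Some (\<lambda>n. h (prod_encode (n, list_encode (map p
                 [0..<(LEAST k. h (prod_encode (n, list_encode (map p [0..<k]))) \<noteq> 0)]))) - 1)
      else None)"

definition bpair :: "baire \<Rightarrow> baire \<Rightarrow> baire" where
  "bpair p q = (\<lambda>n. if even n then p (n div 2) else q (n div 2))"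

text \<open>A representation of a set of elements of type 'a is a partial map from Baire space;
  a partial multi-valued problem f is a map to sets of values, its domain being the set of
  points with nonempty value set.\<close>

definition realizes ::
  "(baire \<Rightarrow> 'a option) \<Rightarrow> (baire \<Rightarrow> 'b option) \<Rightarrow> ('a \<Rightarrow> 'b set) \<Rightarrow> (baire \<Rightarrow> baire) \<Rightarrow> bool" where
  "realizes \<delta>X \<delta>Y f F \<longleftrightarrow>
     (\<forall>p x. \<delta>X p = Some x \<longrightarrow> f x \<noteq> {} \<longrightarrow> (\<exists>y. \<delta>Y (F p) = Some y \<and> y \<in> f x))"

definition weihrauch_le ::
  "(baire \<Rightarrow> 'a option) \<Rightarrow> (baire \<Rightarrow> 'b option) \<Rightarrow> ('a \<Rightarrow> 'b set) \<Rightarrow>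
   (baire \<Rightarrow> 'c option) \<Rightarrow> (baire \<Rightarrow> 'd option) \<Rightarrow> ('c \<Rightarrow> 'd set) \<Rightarrow> bool" where
  "weihrauch_le \<delta>X \<delta>Y f \<delta>U \<delta>V g \<longleftrightarrow>
     (\<exists>hK hH. computable_nat hK \<and> computable_nat hH \<and>
        (\<forall>G. realizes \<delta>U \<delta>V g G \<longrightarrow>
           (\<forall>p x. \<delta>X p = Some x \<longrightarrow> f x \<noteq> {} \<longrightarrow>
              (\<exists>q r. tt_apply hK p = Some q \<and> tt_apply hH (bpair p (G q)) = Some r \<and>
                     (\<exists>y. \<delta>Y r = Some y \<and> y \<in> f x)))))"

definition mv_comp :: "('b \<Rightarrow> 'c set) \<Rightarrow> ('a \<Rightarrow> 'b set) \<Rightarrow> 'a \<Rightarrow> 'c set" where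
  "mv_comp g f x = (if f x \<noteq> {} \<and> (\<forall>y\<in>f x. g y \<noteq> {}) then (\<Union>y\<in>f x. g y) else {})"

text \<open>f \<le>_W g * h.  Since g * h is the maximum of the degrees of g0 \<circ> h0 with g0 \<le>_W g,
  h0 \<le>_W h, this holds iff f \<le>_W g0 \<circ> h0 for some such g0, h0; and every problem is
  Weihrauch equivalent to one on Baire space with identity representations (its realizer
  version), which is compatible with composition, so g0, h0 range over those.\<close>
definition weihrauch_le_cprod ::
  "(baire \<Rightarrow> 'a option) \<Rightarrow> (baire \<Rightarrow> 'b option) \<Rightarrow> ('a \<Rightarrow> 'b set) \<Rightarrow>
   (baire \<Rightarrow> 'c option) \<Rightarrow> (baire \<Rightarrow> 'd option) \<Rightarrow> ('c \<Rightarrow> 'd set) \<Rightarrow>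
   (baire \<Rightarrow> 'e option) \<Rightarrow> (baire \<Rightarrow> 'f option) \<Rightarrow> ('e \<Rightarrow> 'f set) \<Rightarrow> bool" where
  "weihrauch_le_cprod \<delta>X \<delta>Y f \<delta>U \<delta>V g \<delta>W \<delta>Z h \<longleftrightarrow>
     (\<exists>(g0 :: baire \<Rightarrow> baire set) (h0 :: baire \<Rightarrow> baire set).
        weihrauch_le Some Some g0 \<delta>U \<delta>V g \<and>
        weihrauch_le Some Some h0 \<delta>W \<delta>Z h \<and>
        weihrauch_le \<delta>X \<delta>Y f Some Some (mv_comp g0 h0))"

definition rep_prod :: "(baire \<Rightarrow> 'a option) \<Rightarrow> (baire \<Rightarrow> 'b option) \<Rightarrow> baire \<Rightarrow> ('a \<times> 'b) option" where
  "rep_prod \<delta>1 \<delta>2 r =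
     (case (\<delta>1 (\<lambda>n. r (2 * n)), \<delta>2 (\<lambda>n. r (2 * n + 1))) of
        (Some a, Some b) \<Rightarrow> Some (a, b)
      | _ \<Rightarrow> None)"

definition nat_rep :: "baire \<Rightarrow> nat option" where
  "nat_rep p = Some (p 0)"

definition seq_rep :: "baire \<Rightarrow> (nat \<Rightarrow> baire) option" where
  "seq_rep r = Some (\<lambda>i j. r (prod_encode (i, j)))"

definition real_of_code :: "nat \<Rightarrow> real" where
  "real_of_code n = (case prod_decode n of (a, b) \<Rightarrow> of_int (int_decode a) / real (b + 1))"

definition cauchy_rep :: "baire \<Rightarrow> real option" where
  "cauchy_rep p =
     (if \<exists>x. \<forall>n. \<bar>real_of_code (p n) - x\<bar> \<le> (1/2) ^ n
      then Some (THE x. \<forall>n. \<bar>real_of_code (p n) - x\<bar> \<le> (1/2) ^ n) else None)"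

definition ivl_of_code :: "nat \<Rightarrow> real \<times> real" where
  "ivl_of_code k = (real_of_code (fst (prod_decode k)), real_of_code (snd (prod_decode k)))"

text \<open>Positive information: p enumerates (entries n+1 encode interval n, 0 = no output)
  exactly the rational open intervals meeting A.\<close>
definition names_closed_pos :: "baire \<Rightarrow> real set \<Rightarrow> bool" where
  "names_closed_pos p A \<longleftrightarrow>
     {ivl_of_code k | k. Suc k \<in> range p} =
     {(a, b). a \<in> \<rat> \<and> b \<in> \<rat> \<and> a < b \<and> (\<exists>y\<in>A. a < y \<and> y < b)}"

definition closed_pos_rep :: "baire \<Rightarrow> real set option" where
  "closed_pos_rep p =
     (if \<exists>A. closed A \<and> names_closed_pos p A
      then Some (THE A. closed A \<and> names_closed_pos p A) else None)"

definition proj_plus :: "real \<times> real set \<Rightarrow> real set" where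
  "proj_plus xA = (case xA of (x, A) \<Rightarrow>
     (if closed A \<and> A \<noteq> {} then {y \<in> A. \<bar>x - y\<bar> = infdist x A} else {}))"

definition llpo :: "baire \<times> baire \<Rightarrow> nat set" where
  "llpo pp = (case pp of (p0, p1) \<Rightarrow>
     (if \<forall>j m j' m'. j < 2 \<and> j' < 2 \<and> ([p0, p1] ! j) m \<noteq> 0 \<and> ([p0, p1] ! j') m' \<noteq> 0
                      \<longrightarrow> j = j' \<and> m = m'
      then {i. i < 2 \<and> [p0, p1] ! i = (\<lambda>_. 0)} else {}))"

definition baire_lim :: "(nat \<Rightarrow> baire) \<Rightarrow> baire set" where
  "baire_lim s = {p. \<forall>k. \<exists>N. \<forall>i\<ge>N. \<forall>n<k. s i n = p n}"

end

(*
  Let d = d(x, A).  The nearest points of A to x are among the two candidates x - d and x + d,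
  and at least one of them lies in A.  From names of x and A, d can be approximated from above
  by the bounds max |x - a| |x - b| over enumerated intervals (a, b); hence the binary digits of d,
  and so Cauchy names of both candidates, are limit computable.  A candidate outside A is
  eventually certified by a rational interval around it that contains no enumerated interval.
  Marking the first certificate found for each candidate gives, in the limit, an LLPO instance:
  at most one mark is set overall, and an unmarked side has its candidate in A.  So one limit
  computes the instance together with both names, and LLPO selects the right name.
*)
theory Submission
  imports Defs
begin

text \<open>A function is shown to be recursive by writing it as an expression over functions
  already known to be recursive; compile translates well-formed expressions into recf.\<close>

primrec prim_rec :: "(nat \<Rightarrow> nat \<Rightarrow> nat) \<Rightarrow> nat \<Rightarrow> nat \<Rightarrow> nat" where
  "prim_rec g z 0 = z"
| "prim_rec g z (Suc i) = g (prim_rec g z i) i"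

definition recursive :: "nat \<Rightarrow> (nat list \<Rightarrow> nat) \<Rightarrow> bool" where
  "recursive k f \<longleftrightarrow> (\<exists>c. \<forall>xs. length xs = k \<longrightarrow> reval c xs (f xs))"

datatype expr = EVar nat | EConst nat | ESuc expr | ECall "nat list \<Rightarrow> nat" "expr list" | EPrim expr expr expr

primrec eval_expr :: "expr \<Rightarrow> nat list \<Rightarrow> nat" where
  "eval_expr (EVar i) env = env ! i"
| "eval_expr (EConst n) env = n"
| "eval_expr (ESuc e) env = Suc (eval_expr e env)"
| "eval_expr (ECall f es) env = f (map (\<lambda>e. eval_expr e env) es)"
| "eval_expr (EPrim b s n) env = prim_rec (\<lambda>acc i. eval_expr s (acc # i # env)) (eval_expr b env) (eval_expr n env)"

primrec wf_expr :: "nat \<Rightarrow> expr \<Rightarrow> bool" where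
  "wf_expr m (EVar i) = (i < m)"
| "wf_expr m (EConst n) = True"
| "wf_expr m (ESuc e) = wf_expr m e"
| "wf_expr m (ECall f es) = (recursive (length es) f \<and> list_all (wf_expr m) es)"
| "wf_expr m (EPrim b s n) = (wf_expr m b \<and> wf_expr (Suc (Suc m)) s \<and> wf_expr m n)"

primrec recf_numeral :: "nat \<Rightarrow> recf" where
  "recf_numeral 0 = Zf"
| "recf_numeral (Suc n) = Cf Sf [recf_numeral n]"

primrec compile :: "nat \<Rightarrow> expr \<Rightarrow> recf" where
  "compile m (EVar i) = Pf i"
| "compile m (EConst n) = recf_numeral n"
| "compile m (ESuc e) = Cf Sf [compile m e]"
| "compile m (ECall f es) = Cf (SOME c. \<forall>xs. length xs = length es \<longrightarrow> reval c xs (f xs)) (map (compile m) es)"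
| "compile m (EPrim b s n) = Cf (Rf (compile m b) (compile (Suc (Suc m)) s)) (compile m n # map Pf [0..<m])"

lemma reval_recf_numeral: "reval (recf_numeral n) xs n"
proof (induction n)
  case 0 then show ?case by (simp add: reval_Z)
next
  case (Suc n)
  show ?case
    unfolding recf_numeral.simps by (rule reval_C[where ys="[n]"]) (use Suc in \<open>auto intro: reval_S\<close>)
qed

lemma reval_Rf_prim_rec:
  assumes "reval f xs z" "\<And>acc i. reval g (acc # i # xs) (G acc i)"
  shows "reval (Rf f g) (n # xs) (prim_rec G z n)"
proof (induction n)
  case 0 then show ?case using assms by (simp add: reval_R0)
next
  case (Suc n) then show ?case using assms by (simp add: reval_RS)
qed

lemma compile_correct:
  "wf_expr m e \<Longrightarrow> length env = m \<Longrightarrow> reval (compile m e) env (eval_expr e env)"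
proof (induction e arbitrary: m env)
  case (EVar i) then show ?case by (simp add: reval_P)
next
  case (EConst n) then show ?case by (simp add: reval_recf_numeral)
next
  case (ESuc e)
  show ?case
    unfolding compile.simps eval_expr.simps by (rule reval_C[where ys="[eval_expr e env]"]) (use ESuc in \<open>auto intro: reval_S\<close>)
next
  case (ECall f es)
  have "recursive (length es) f" using ECall.prems by simp
  then have f: "\<forall>xs. length xs = length es \<longrightarrow>
      reval (SOME c. \<forall>xs. length xs = length es \<longrightarrow> reval c xs (f xs)) xs (f xs)"
    unfolding recursive_def by (rule someI_ex)
  have args: "\<forall>i<length es. reval (compile m (es ! i)) env (eval_expr (es ! i) env)"
    using ECall.IH ECall.prems by (auto simp: list_all_length)
  show ?case
    using f args by (auto intro!: reval_C[where ys="map (\<lambda>e. eval_expr e env) es"])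
next
  case (EPrim b s n)
  have args: "\<forall>i<Suc m. reval ((compile m n # map Pf [0..<m]) ! i) env ((eval_expr n env # env) ! i)"
  proof (intro allI impI)
    fix i assume "i < Suc m"
    then show "reval ((compile m n # map Pf [0..<m]) ! i) env ((eval_expr n env # env) ! i)"
      using EPrim by (cases i) (auto simp: reval_P)
  qed
  have "reval (Rf (compile m b) (compile (Suc (Suc m)) s)) (eval_expr n env # env)
      (prim_rec (\<lambda>acc i. eval_expr s (acc # i # env)) (eval_expr b env) (eval_expr n env))"
    using EPrim by (intro reval_Rf_prim_rec) auto
  then show ?case
    using args EPrim.prems by (simp add: reval_C[where ys="eval_expr n env # env"])
qed

lemma recursiveI:
  assumes "wf_expr k e" "\<And>xs. length xs = k \<Longrightarrow> eval_expr e xs = f xs"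
  shows "recursive k f"
  unfolding recursive_def using compile_correct[OF assms(1)] assms(2) by metis

definition rec1 :: "(nat \<Rightarrow> nat) \<Rightarrow> bool" where
  "rec1 f \<longleftrightarrow> recursive 1 (\<lambda>xs. f (xs ! 0))"
definition rec2 :: "(nat \<Rightarrow> nat \<Rightarrow> nat) \<Rightarrow> bool" where
  "rec2 f \<longleftrightarrow> recursive 2 (\<lambda>xs. f (xs ! 0) (xs ! 1))"
definition rec3 :: "(nat \<Rightarrow> nat \<Rightarrow> nat \<Rightarrow> nat) \<Rightarrow> bool" where
  "rec3 f \<longleftrightarrow> recursive 3 (\<lambda>xs. f (xs ! 0) (xs ! 1) (xs ! 2))"
definition rec4 :: "(nat \<Rightarrow> nat \<Rightarrow> nat \<Rightarrow> nat \<Rightarrow> nat) \<Rightarrow> bool" where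
  "rec4 f \<longleftrightarrow> recursive 4 (\<lambda>xs. f (xs ! 0) (xs ! 1) (xs ! 2) (xs ! 3))"
definition rec5 :: "(nat \<Rightarrow> nat \<Rightarrow> nat \<Rightarrow> nat \<Rightarrow> nat \<Rightarrow> nat) \<Rightarrow> bool" where
  "rec5 f \<longleftrightarrow> recursive 5 (\<lambda>xs. f (xs ! 0) (xs ! 1) (xs ! 2) (xs ! 3) (xs ! 4))"

definition call1 :: "(nat \<Rightarrow> nat) \<Rightarrow> expr \<Rightarrow> expr" where
  "call1 f a = ECall (\<lambda>xs. f (xs ! 0)) [a]"
definition call2 :: "(nat \<Rightarrow> nat \<Rightarrow> nat) \<Rightarrow> expr \<Rightarrow> expr \<Rightarrow> expr" where
  "call2 f a b = ECall (\<lambda>xs. f (xs ! 0) (xs ! 1)) [a, b]"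
definition call3 :: "(nat \<Rightarrow> nat \<Rightarrow> nat \<Rightarrow> nat) \<Rightarrow> expr \<Rightarrow> expr \<Rightarrow> expr \<Rightarrow> expr" where
  "call3 f a b c = ECall (\<lambda>xs. f (xs ! 0) (xs ! 1) (xs ! 2)) [a, b, c]"
definition call4 :: "(nat \<Rightarrow> nat \<Rightarrow> nat \<Rightarrow> nat \<Rightarrow> nat) \<Rightarrow> expr \<Rightarrow> expr \<Rightarrow> expr \<Rightarrow> expr \<Rightarrow> expr" where
  "call4 f a b c d = ECall (\<lambda>xs. f (xs ! 0) (xs ! 1) (xs ! 2) (xs ! 3)) [a, b, c, d]"
definition call5 ::
    "(nat \<Rightarrow> nat \<Rightarrow> nat \<Rightarrow> nat \<Rightarrow> nat \<Rightarrow> nat) \<Rightarrow> expr \<Rightarrow> expr \<Rightarrow> expr \<Rightarrow> expr \<Rightarrow> expr \<Rightarrow> expr" where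
  "call5 f a b c d e = ECall (\<lambda>xs. f (xs ! 0) (xs ! 1) (xs ! 2) (xs ! 3) (xs ! 4)) [a, b, c, d, e]"

lemma eval_call [simp]:
  "eval_expr (call1 f1 a) env = f1 (eval_expr a env)"
  "eval_expr (call2 f2 a b) env = f2 (eval_expr a env) (eval_expr b env)"
  "eval_expr (call3 f3 a b c) env = f3 (eval_expr a env) (eval_expr b env) (eval_expr c env)"
  "eval_expr (call4 f4 a b c d) env =
     f4 (eval_expr a env) (eval_expr b env) (eval_expr c env) (eval_expr d env)"
  "eval_expr (call5 f5 a b c d e) env =
     f5 (eval_expr a env) (eval_expr b env) (eval_expr c env) (eval_expr d env) (eval_expr e env)"
  by (simp_all add: call1_def call2_def call3_def call4_def call5_def)

lemma wf_call [simp]: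
  "wf_expr m (call1 f1 a) = (rec1 f1 \<and> wf_expr m a)"
  "wf_expr m (call2 f2 a b) = (rec2 f2 \<and> wf_expr m a \<and> wf_expr m b)"
  "wf_expr m (call3 f3 a b c) = (rec3 f3 \<and> wf_expr m a \<and> wf_expr m b \<and> wf_expr m c)"
  "wf_expr m (call4 f4 a b c d) =
     (rec4 f4 \<and> wf_expr m a \<and> wf_expr m b \<and> wf_expr m c \<and> wf_expr m d)"
  "wf_expr m (call5 f5 a b c d e) =
     (rec5 f5 \<and> wf_expr m a \<and> wf_expr m b \<and> wf_expr m c \<and> wf_expr m d \<and> wf_expr m e)"
  by (simp_all add: call1_def call2_def call3_def call4_def call5_def
      rec1_def rec2_def rec3_def rec4_def rec5_def eval_nat_numeral)

lemma rec1I: "wf_expr 1 e \<Longrightarrow> (\<And>x. eval_expr e [x] = f x) \<Longrightarrow> rec1 f"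
  unfolding rec1_def by (rule recursiveI) (auto simp: length_Suc_conv)
lemma rec2I: "wf_expr 2 e \<Longrightarrow> (\<And>x y. eval_expr e [x, y] = f x y) \<Longrightarrow> rec2 f"
  unfolding rec2_def by (rule recursiveI) (auto simp: length_Suc_conv numeral_2_eq_2)
lemma rec3I: "wf_expr 3 e \<Longrightarrow> (\<And>x y z. eval_expr e [x, y, z] = f x y z) \<Longrightarrow> rec3 f"
  unfolding rec3_def by (rule recursiveI) (auto simp: length_Suc_conv numeral_3_eq_3)
lemma rec4I: "wf_expr 4 e \<Longrightarrow> (\<And>x y z w. eval_expr e [x, y, z, w] = f x y z w) \<Longrightarrow> rec4 f"
  unfolding rec4_def by (rule recursiveI) (auto simp: length_Suc_conv eval_nat_numeral)
lemma rec5I: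
  "wf_expr 5 e \<Longrightarrow> (\<And>x y z w u. eval_expr e [x, y, z, w, u] = f x y z w u) \<Longrightarrow> rec5 f"
  unfolding rec5_def by (rule recursiveI) (auto simp: length_Suc_conv eval_nat_numeral)

lemma computable_nat_rec1: "rec1 h \<Longrightarrow> computable_nat h"
  unfolding rec1_def recursive_def computable_nat_def by (metis length_Cons list.size(3) nth_Cons_0 One_nat_def)

lemma prim_rec_add: "prim_rec (\<lambda>acc i. Suc acc) y n = n + y" by (induction n) auto
lemma prim_rec_mult: "prim_rec (\<lambda>acc i. acc + y) 0 n = n * y" by (induction n) auto
lemma prim_rec_pred: "prim_rec (\<lambda>acc i. i) 0 n = n - Suc 0" by (induction n) auto
lemma prim_rec_sub: "prim_rec (\<lambda>acc i. acc - Suc 0) x n = x - n" by (induction n) auto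

lemma rec2_add: "rec2 (+)"
  by (rule rec2I[where e="EPrim (EVar 1) (ESuc (EVar 0)) (EVar 0)"]) (simp_all add: prim_rec_add)
lemma rec2_mult: "rec2 (*)"
  by (rule rec2I[where e="EPrim (EConst 0) (call2 (+) (EVar 0) (EVar 3)) (EVar 0)"])
     (simp_all add: rec2_add prim_rec_mult)
lemma rec1_pred: "rec1 (\<lambda>x. x - Suc 0)"
  by (rule rec1I[where e="EPrim (EConst 0) (EVar 1) (EVar 0)"]) (simp_all add: prim_rec_pred)
lemma rec2_sub: "rec2 (-)"
  by (rule rec2I[where e="EPrim (EVar 0) (call1 (\<lambda>x. x - Suc 0) (EVar 0)) (EVar 1)"])
     (simp_all add: rec1_pred prim_rec_sub)

definition cond :: "nat \<Rightarrow> nat \<Rightarrow> nat \<Rightarrow> nat" where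
  "cond c a b = (if c \<noteq> 0 then a else b)"

lemma rec3_cond: "rec3 cond"
  by (rule rec3I[where e="call2 (+) (call2 (*) (EVar 1) (call2 (-) (EConst 1) (call2 (-) (EConst 1) (EVar 0))))
                              (call2 (*) (EVar 2) (call2 (-) (EConst 1) (EVar 0)))"])
     (auto simp: rec2_add rec2_mult rec2_sub cond_def)

lemma cond_simp [simp]: "cond (of_bool P) a b = (if P then a else b)"
  by (simp add: cond_def)

definition le_ind :: "nat \<Rightarrow> nat \<Rightarrow> nat" where "le_ind x y = of_bool (x \<le> y)"
definition lt_ind :: "nat \<Rightarrow> nat \<Rightarrow> nat" where "lt_ind x y = of_bool (x < y)"
definition eq_ind :: "nat \<Rightarrow> nat \<Rightarrow> nat" where "eq_ind x y = of_bool (x = y)"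
definition and_ind :: "nat \<Rightarrow> nat \<Rightarrow> nat" where "and_ind x y = of_bool (x \<noteq> 0 \<and> y \<noteq> 0)"
definition not_ind :: "nat \<Rightarrow> nat" where "not_ind x = of_bool (x = 0)"

lemma rec2_le_ind: "rec2 le_ind"
  by (rule rec2I[where e="call2 (-) (EConst 1) (call2 (-) (EVar 0) (EVar 1))"])
     (auto simp: rec2_sub le_ind_def)
lemma rec2_lt_ind: "rec2 lt_ind"
  by (rule rec2I[where e="call2 le_ind (ESuc (EVar 0)) (EVar 1)"])
     (auto simp: rec2_le_ind le_ind_def lt_ind_def)
lemma rec2_eq_ind: "rec2 eq_ind"
  by (rule rec2I[where e="call2 (*) (call2 le_ind (EVar 0) (EVar 1)) (call2 le_ind (EVar 1) (EVar 0))"])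
     (auto simp: rec2_le_ind rec2_mult le_ind_def eq_ind_def)
lemma rec2_and_ind: "rec2 and_ind"
  by (rule rec2I[where e="call3 cond (EVar 0) (call3 cond (EVar 1) (EConst 1) (EConst 0)) (EConst 0)"])
     (auto simp: rec3_cond and_ind_def cond_def)
lemma rec1_not_ind: "rec1 not_ind"
  by (rule rec1I[where e="call3 cond (EVar 0) (EConst 0) (EConst 1)"])
     (auto simp: rec3_cond not_ind_def cond_def)

lemmas rec_basic = rec2_add rec2_mult rec2_sub rec3_cond rec2_le_ind rec2_lt_ind rec2_eq_ind rec2_and_ind rec1_not_ind

lemma ind_simps [simp]:
  "le_ind x y \<noteq> 0 \<longleftrightarrow> x \<le> y" "lt_ind x y \<noteq> 0 \<longleftrightarrow> x < y" "eq_ind x y \<noteq> 0 \<longleftrightarrow> x = y"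
  "and_ind a b \<noteq> 0 \<longleftrightarrow> a \<noteq> 0 \<and> b \<noteq> 0" "not_ind a \<noteq> 0 \<longleftrightarrow> a = 0"
  by (auto simp: le_ind_def lt_ind_def eq_ind_def and_ind_def not_ind_def)

lemmas ind_defs = cond_def le_ind_def lt_ind_def eq_ind_def and_ind_def not_ind_def

definition bounded_search :: "(nat \<Rightarrow> bool) \<Rightarrow> nat \<Rightarrow> nat" where
  "bounded_search P n = prim_rec (\<lambda>r i. if r < i then r else if P i then i else Suc i) 0 n"

lemma bounded_search_eq: "bounded_search P n = (if \<exists>i<n. P i then LEAST i. P i else n)"
proof (induction n)
  case 0 then show ?case by (simp add: bounded_search_def)
next
  case (Suc n)
  have e: "bounded_search P (Suc n) = (if bounded_search P n < n then bounded_search P n else if P n then n else Suc n)"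
    by (simp add: bounded_search_def)
  show ?case
  proof (cases "\<exists>i<n. P i")
    case True
    then obtain i where i: "i < n" "P i" by blast
    then have L: "(LEAST i. P i) < n" using Least_le[of P i] by simp
    have "bounded_search P n = (LEAST i. P i)" using Suc.IH True by simp
    then have "bounded_search P (Suc n) = (LEAST i. P i)" using e L by simp
    moreover have "\<exists>i<Suc n. P i" using i less_SucI by blast
    ultimately show ?thesis by simp
  next
    case False
    have bn: "bounded_search P n = n" using Suc.IH False by (simp only: if_not_P[OF False] if_False)
    show ?thesis
    proof (cases "P n")
      case True
      then have "(LEAST i. P i) = n" using False by (intro Least_equality) (auto simp: not_less[symmetric])
      then show ?thesis using True e bn by auto
    next
      case f2: False
      then show ?thesis using False e bn by (auto simp: less_Suc_eq)
    qed
  qed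
qed

lemma bounded_search_Least: "P i \<Longrightarrow> i < n \<Longrightarrow> bounded_search P n = (LEAST i. P i)"
  by (auto simp: bounded_search_eq)

lemma prim_rec_triangle: "prim_rec (\<lambda>acc i. Suc (acc + i)) 0 n = triangle n"
  by (induction n) auto

lemma rec1_triangle: "rec1 triangle"
  by (rule rec1I[where e="EPrim (EConst 0) (call2 (+) (EVar 0) (ESuc (EVar 1))) (EVar 0)"])
     (simp_all add: rec_basic prim_rec_triangle)

definition diag_index :: "nat \<Rightarrow> nat" where
  "diag_index x = bounded_search (\<lambda>s. x < triangle (Suc s)) (Suc x)"
definition unpair1 :: "nat \<Rightarrow> nat" where "unpair1 x = x - triangle (diag_index x)"
definition unpair2 :: "nat \<Rightarrow> nat" where "unpair2 x = diag_index x - unpair1 x"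

lemma le_triangle: "n \<le> triangle n"
  by (induction n) auto

lemma prod_decode_unpair: "prod_decode x = (unpair1 x, unpair2 x)"
proof -
  let ?P = "\<lambda>s. x < triangle (Suc s)"
  have px: "?P x" using le_triangle[of "Suc x"] by simp
  have s: "diag_index x = (LEAST s. ?P s)" unfolding diag_index_def by (rule bounded_search_Least[where P="?P", OF px]) simp
  have ps: "?P (diag_index x)" unfolding s by (rule LeastI[where P="?P", OF px])
  have le: "triangle (diag_index x) \<le> x"
  proof (cases "diag_index x")
    case 0 then show ?thesis by simp
  next
    case (Suc s')
    then have "s' < (LEAST s. ?P s)" using s by simp
    then have "\<not> ?P s'" by (rule not_less_Least)
    then show ?thesis using Suc by simp
  qed
  have m: "unpair1 x \<le> diag_index x" using ps le unfolding unpair1_def by simp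
  have "prod_encode (unpair1 x, unpair2 x) = x"
    unfolding prod_encode_def unpair2_def using m le by (simp add: unpair1_def)
  then show ?thesis by (metis prod_encode_inverse)
qed

lemma unpair_prod_encode [simp]: "unpair1 (prod_encode (a, b)) = a" "unpair2 (prod_encode (a, b)) = b"
  using prod_decode_unpair[of "prod_encode (a, b)"] by simp_all

lemma prod_encode_unpair [simp]: "prod_encode (unpair1 x, unpair2 x) = x"
  by (metis prod_decode_unpair prod_decode_inverse)

lemma unpair_le: "unpair1 x \<le> x" "unpair2 x \<le> x"
  using le_prod_encode_1[where a="unpair1 x" and b="unpair2 x"] le_prod_encode_2[where a="unpair1 x" and b="unpair2 x"]
  by simp_all

lemma rec1_diag_index: "rec1 diag_index"
  by (rule rec1I[where e="EPrim (EConst 0) (call3 cond (call2 lt_ind (EVar 0) (EVar 1)) (EVar 0)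
          (call3 cond (call2 lt_ind (EVar 2) (call1 triangle (ESuc (EVar 1)))) (EVar 1) (ESuc (EVar 1)))) (ESuc (EVar 0))"])
     (simp_all add: rec_basic rec1_triangle diag_index_def bounded_search_def ind_defs)

lemma rec1_unpair1: "rec1 unpair1"
  by (rule rec1I[where e="call2 (-) (EVar 0) (call1 triangle (call1 diag_index (EVar 0)))"])
     (simp_all add: rec_basic rec1_triangle rec1_diag_index unpair1_def)
lemma rec1_unpair2: "rec1 unpair2"
  by (rule rec1I[where e="call2 (-) (call1 diag_index (EVar 0)) (call1 unpair1 (EVar 0))"])
     (simp_all add: rec_basic rec1_unpair1 rec1_diag_index unpair2_def)

definition pair_code :: "nat \<Rightarrow> nat \<Rightarrow> nat" where "pair_code a b = prod_encode (a, b)"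

lemma rec2_pair_code: "rec2 pair_code"
  by (rule rec2I[where e="call2 (+) (call1 triangle (call2 (+) (EVar 0) (EVar 1))) (EVar 0)"])
     (simp_all add: rec_basic rec1_triangle pair_code_def prod_encode_def)

lemma unpair_pair_code [simp]: "unpair1 (pair_code a b) = a" "unpair2 (pair_code a b) = b"
  by (simp_all add: pair_code_def)

lemma pair_code_eq_iff [simp]: "pair_code a b = pair_code c d \<longleftrightarrow> a = c \<and> b = d"
  by (simp add: pair_code_def)

lemma pair_code_0_0 [simp]: "pair_code 0 0 = 0" by (simp add: pair_code_def prod_encode_def)

lemma unpair_0 [simp]: "unpair1 0 = 0" "unpair2 0 = 0"
  using unpair_pair_code[of 0 0] by simp_all

definition code_tl :: "nat \<Rightarrow> nat" where "code_tl c = unpair2 (c - 1)"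
definition code_drop :: "nat \<Rightarrow> nat \<Rightarrow> nat" where "code_drop c i = prim_rec (\<lambda>acc j. code_tl acc) c i"
definition code_nth :: "nat \<Rightarrow> nat \<Rightarrow> nat" where "code_nth c i = unpair1 (code_drop c i - 1)"
definition code_len_ge :: "nat \<Rightarrow> nat \<Rightarrow> bool" where "code_len_ge c k = (k = 0 \<or> code_drop c (k - 1) \<noteq> 0)"

lemma code_drop_list_encode: "code_drop (list_encode xs) i = list_encode (drop i xs)"
proof (induction i)
  case 0 then show ?case by (simp add: code_drop_def)
next
  case (Suc i)
  have "code_drop (list_encode xs) (Suc i) = code_tl (list_encode (drop i xs))"
    using Suc by (simp add: code_drop_def)
  also have "\<dots> = list_encode (drop (Suc i) xs)"
    by (cases "drop i xs") (auto simp: code_tl_def prod_decode_unpair[symmetric] drop_Suc tl_drop[symmetric] drop_eq_Nil2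
        dest!: arg_cong[where f=tl])
  finally show ?case .
qed

lemma code_nth_list_encode: "i < length xs \<Longrightarrow> code_nth (list_encode xs) i = xs ! i"
  by (simp add: code_nth_def code_drop_list_encode Cons_nth_drop_Suc[symmetric] pair_code_def[symmetric])

lemma list_encode_eq_0_iff: "list_encode ys = 0 \<longleftrightarrow> ys = []"
  by (cases ys) auto

lemma code_len_ge_list_encode: "code_len_ge (list_encode xs) k \<longleftrightarrow> k \<le> length xs"
  by (auto simp: code_len_ge_def code_drop_list_encode list_encode_eq_0_iff)

lemma rec1_code_tl: "rec1 code_tl"
  by (rule rec1I[where e="call1 unpair2 (call2 (-) (EVar 0) (EConst 1))"])
     (simp_all add: rec_basic rec1_unpair2 code_tl_def)
lemma rec2_code_drop: "rec2 code_drop"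
  by (rule rec2I[where e="EPrim (EVar 0) (call1 code_tl (EVar 0)) (EVar 1)"])
     (simp_all add: rec1_code_tl code_drop_def)
lemma rec2_code_nth: "rec2 code_nth"
  by (rule rec2I[where e="call1 unpair1 (call2 (-) (call2 code_drop (EVar 0) (EVar 1)) (EConst 1))"])
     (simp_all add: rec_basic rec1_unpair1 rec2_code_drop code_nth_def)
lemma rec2_code_len_ge: "rec2 (\<lambda>c k. of_bool (code_len_ge c k))"
  by (rule rec2I[where e="call3 cond (call2 eq_ind (EVar 1) (EConst 0)) (EConst 1)
             (call3 cond (call2 code_drop (EVar 0) (call2 (-) (EVar 1) (EConst 1))) (EConst 1) (EConst 0))"])
     (auto simp: rec_basic rec2_code_drop code_len_ge_def ind_defs)

definition div_search :: "nat \<Rightarrow> nat \<Rightarrow> nat" where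
  "div_search x y = bounded_search (\<lambda>q. x < Suc q * y) (Suc x)"

lemma div_search_eq: "0 < y \<Longrightarrow> div_search x y = x div y"
proof -
  assume y: "0 < y"
  have p: "x < Suc (x div y) * y"
    using y by (metis add.commute div_mult_mod_eq mod_less_divisor mult_Suc add_less_mono1 nat_add_left_cancel_less)
  have "x div y \<le> x" by simp
  then have b: "x div y < Suc x" by (rule le_imp_less_Suc)
  have "(LEAST q. x < Suc q * y) = x div y"
  proof (rule Least_equality)
    show "x < Suc (x div y) * y" by (rule p)
    fix q assume "x < Suc q * y"
    then show "x div y \<le> q"
      by (metis less_Suc_eq_le less_mult_imp_div_less)
  qed
  then show ?thesis unfolding div_search_def using bounded_search_Least[where P="\<lambda>q. x < Suc q * y", OF p b] by simp
qed

lemma rec2_div_search: "rec2 div_search"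
  by (rule rec2I[where e="EPrim (EConst 0) (call3 cond (call2 lt_ind (EVar 0) (EVar 1)) (EVar 0)
          (call3 cond (call2 lt_ind (EVar 2) (call2 (*) (ESuc (EVar 1)) (EVar 3))) (EVar 1) (ESuc (EVar 1)))) (ESuc (EVar 0))"])
     (simp_all add: rec_basic div_search_def bounded_search_def ind_defs)

definition pow2 :: "nat \<Rightarrow> nat" where "pow2 n = prim_rec (\<lambda>acc i. acc + acc) 1 n"

lemma pow2_eq: "pow2 n = 2 ^ n"
  by (induction n) (auto simp: pow2_def)

lemma rec1_pow2: "rec1 pow2"
  by (rule rec1I[where e="EPrim (EConst 1) (call2 (+) (EVar 0) (EVar 0)) (EVar 0)"])
     (simp_all add: rec_basic pow2_def)

lemma rec1_div2: "rec1 (\<lambda>x. x div 2)"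
  by (rule rec1I[where e="call2 div_search (EVar 0) (EConst 2)"])
     (simp_all add: rec2_div_search div_search_eq)

lemma rec1_even: "rec1 (\<lambda>x. of_bool (even x))"
  by (rule rec1I[where e="call2 eq_ind (EVar 0) (call2 (*) (EConst 2) (call1 (\<lambda>x. x div 2) (EVar 0)))"])
     (auto simp: rec_basic rec1_div2 eq_ind_def, presburger+)

lemma rec1_mod2: "rec1 (\<lambda>x. x mod 2)"
  by (rule rec1I[where e="call2 (-) (EVar 0) (call2 (*) (EConst 2) (call1 (\<lambda>x. x div 2) (EVar 0)))"])
     (auto simp: rec_basic rec1_div2, presburger)

section \<open>Associates that read a finite prefix of the input\<close>

definition std_assoc :: "(nat \<Rightarrow> nat) \<Rightarrow> (nat \<Rightarrow> nat \<Rightarrow> nat) \<Rightarrow> nat \<Rightarrow> nat" where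
  "std_assoc need \<Phi> x =
     (if code_len_ge (unpair2 x) (need (unpair1 x)) then Suc (\<Phi> (unpair1 x) (unpair2 x)) else 0)"

lemma tt_apply_std_assoc:
  "tt_apply (std_assoc need \<Phi>) p = Some (\<lambda>n. \<Phi> n (list_encode (map p [0..<need n])))"
proof -
  let ?h = "std_assoc need \<Phi>" and ?pre = "\<lambda>k. list_encode (map p [0..<k])"
  have h: "?h (prod_encode (n, ?pre k)) = (if need n \<le> k then Suc (\<Phi> n (?pre k)) else 0)" for n k
    by (simp add: std_assoc_def code_len_ge_list_encode)
  have least: "(LEAST k. ?h (prod_encode (n, ?pre k)) \<noteq> 0) = need n" for n
    by (rule Least_equality) (auto simp: h split: if_splits)
  have "\<forall>n. \<exists>k. ?h (prod_encode (n, ?pre k)) \<noteq> 0"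
    using h by (metis order_refl nat.distinct(1))
  then show ?thesis
    unfolding tt_apply_def least by (simp add: h)
qed

lemma computable_std_assoc: "rec1 need \<Longrightarrow> rec2 \<Phi> \<Longrightarrow> computable_nat (std_assoc need \<Phi>)"
  apply (rule computable_nat_rec1)
  apply (rule rec1I[where e="call3 cond (call2 (\<lambda>c k. of_bool (code_len_ge c k)) (call1 unpair2 (EVar 0)) (call1 need (call1 unpair1 (EVar 0))))
       (ESuc (call2 \<Phi> (call1 unpair1 (EVar 0)) (call1 unpair2 (EVar 0)))) (EConst 0)"])
   apply (simp_all add: rec_basic rec2_code_len_ge rec1_unpair1 rec1_unpair2 std_assoc_def)
  done

lemma code_nth_prefix: "i < N \<Longrightarrow> code_nth (list_encode (map p [0..<N])) i = p i"
  by (simp add: code_nth_list_encode)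

text \<open>The code of (P, N, M) stands for (P - N) / (M + 1), so that rational arithmetic
  becomes arithmetic on naturals.\<close>

definition rat_mk :: "nat \<Rightarrow> nat \<Rightarrow> nat \<Rightarrow> nat" where "rat_mk P N M = pair_code P (pair_code N M)"
definition rat_pos :: "nat \<Rightarrow> nat" where "rat_pos t = unpair1 t"
definition rat_neg :: "nat \<Rightarrow> nat" where "rat_neg t = unpair1 (unpair2 t)"
definition rat_den :: "nat \<Rightarrow> nat" where "rat_den t = unpair2 (unpair2 t)"

lemma rat_mk_sel [simp]: "rat_pos (rat_mk P N M) = P" "rat_neg (rat_mk P N M) = N" "rat_den (rat_mk P N M) = M"
  by (simp_all add: rat_mk_def rat_pos_def rat_neg_def rat_den_def)

definition rat_val :: "nat \<Rightarrow> real" where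
  "rat_val t = (real (rat_pos t) - real (rat_neg t)) / (real (rat_den t) + 1)"

lemma rat_val_mk: "rat_val (rat_mk P N M) = (real P - real N) / (real M + 1)"
  by (simp add: rat_val_def)

lemma rat_sel_0 [simp]: "rat_pos 0 = 0" "rat_neg 0 = 0" "rat_den 0 = 0"
  by (simp_all add: rat_pos_def rat_neg_def rat_den_def)

lemma rat_val_0 [simp]: "rat_val 0 = 0" by (simp add: rat_val_def)

definition rat_add :: "nat \<Rightarrow> nat \<Rightarrow> nat" where
  "rat_add a b =
     rat_mk (rat_pos a * (rat_den b + 1) + rat_pos b * (rat_den a + 1))
            (rat_neg a * (rat_den b + 1) + rat_neg b * (rat_den a + 1))
            ((rat_den a + 1) * (rat_den b + 1) - 1)"
definition rat_minus :: "nat \<Rightarrow> nat" where "rat_minus a = rat_mk (rat_neg a) (rat_pos a) (rat_den a)"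
definition rat_diff :: "nat \<Rightarrow> nat \<Rightarrow> nat" where "rat_diff a b = rat_add a (rat_minus b)"
definition rat_le :: "nat \<Rightarrow> nat \<Rightarrow> bool" where
  "rat_le a b \<longleftrightarrow>
     rat_pos a * (rat_den b + 1) + rat_neg b * (rat_den a + 1) \<le>
     rat_pos b * (rat_den a + 1) + rat_neg a * (rat_den b + 1)"
definition rat_less :: "nat \<Rightarrow> nat \<Rightarrow> bool" where
  "rat_less a b \<longleftrightarrow>
     rat_pos a * (rat_den b + 1) + rat_neg b * (rat_den a + 1) <
     rat_pos b * (rat_den a + 1) + rat_neg a * (rat_den b + 1)"
definition rat_abs :: "nat \<Rightarrow> nat" where "rat_abs a = (if rat_le 0 a then a else rat_minus a)"
definition rat_max :: "nat \<Rightarrow> nat \<Rightarrow> nat" where "rat_max a b = (if rat_le a b then b else a)"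
definition dyadic :: "nat \<Rightarrow> nat \<Rightarrow> nat" where "dyadic k n = rat_mk k 0 (pow2 n - 1)"
definition floor_pow2 :: "nat \<Rightarrow> nat \<Rightarrow> nat" where
  "floor_pow2 t n = div_search ((rat_pos t - rat_neg t) * pow2 n) (rat_den t + 1)"

definition rat_of_code :: "nat \<Rightarrow> nat" where
  "rat_of_code c =
     (if even (unpair1 c) then rat_mk (unpair1 c div 2) 0 (unpair2 c)
      else rat_mk 0 (unpair1 c div 2 + 1) (unpair2 c))"
definition code_of_rat :: "nat \<Rightarrow> nat" where
  "code_of_rat t =
     pair_code (if rat_neg t \<le> rat_pos t then 2 * (rat_pos t - rat_neg t)
                else 2 * (rat_neg t - rat_pos t - 1) + 1)
               (rat_den t)"

lemma rat_val_add [simp]: "rat_val (rat_add a b) = rat_val a + rat_val b"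
proof -
  have pos: "1 \<le> (rat_den a + 1) * (rat_den b + 1)" by simp
  have e: "real ((rat_den a + 1) * (rat_den b + 1) - 1) + 1 = (real (rat_den a) + 1) * (real (rat_den b) + 1)"
    using pos by (simp add: of_nat_diff algebra_simps)
  show ?thesis
    unfolding rat_add_def rat_val_mk e unfolding rat_val_def
    by (simp add: field_simps)
qed

lemma rat_val_minus [simp]: "rat_val (rat_minus a) = - rat_val a"
  by (simp add: rat_minus_def rat_val_mk rat_val_def field_simps)

lemma rat_val_diff [simp]: "rat_val (rat_diff a b) = rat_val a - rat_val b"
  by (simp add: rat_diff_def)

lemma rat_le_iff: "rat_le a b \<longleftrightarrow> rat_val a \<le> rat_val b"
proof -
  have "rat_val a \<le> rat_val b \<longleftrightarrow> (real (rat_pos a) - real (rat_neg a)) * (real (rat_den b) + 1) \<le> (real (rat_pos b) - real (rat_neg b)) * (real (rat_den a) + 1)"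
    unfolding rat_val_def by (simp add: divide_le_eq le_divide_eq field_simps add_pos_pos)
  also have "\<dots> \<longleftrightarrow> real (rat_pos a * (rat_den b + 1) + rat_neg b * (rat_den a + 1)) \<le> real (rat_pos b * (rat_den a + 1) + rat_neg a * (rat_den b + 1))"
    by (simp add: algebra_simps)
  finally show ?thesis unfolding rat_le_def of_nat_le_iff by simp
qed

lemma rat_less_iff: "rat_less a b \<longleftrightarrow> rat_val a < rat_val b"
proof -
  have "rat_val a < rat_val b \<longleftrightarrow> (real (rat_pos a) - real (rat_neg a)) * (real (rat_den b) + 1) < (real (rat_pos b) - real (rat_neg b)) * (real (rat_den a) + 1)"
    unfolding rat_val_def by (simp add: divide_less_eq less_divide_eq field_simps add_pos_pos)
  also have "\<dots> \<longleftrightarrow> real (rat_pos a * (rat_den b + 1) + rat_neg b * (rat_den a + 1)) < real (rat_pos b * (rat_den a + 1) + rat_neg a * (rat_den b + 1))"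
    by (simp add: algebra_simps)
  finally show ?thesis unfolding rat_less_def of_nat_less_iff by simp
qed

lemma rat_val_abs [simp]: "rat_val (rat_abs a) = \<bar>rat_val a\<bar>"
  by (simp add: rat_abs_def rat_le_iff)

lemma rat_val_max [simp]: "rat_val (rat_max a b) = max (rat_val a) (rat_val b)"
  by (simp add: rat_max_def rat_le_iff)

lemma rat_val_dyadic [simp]: "rat_val (dyadic k n) = real k / 2 ^ n"
proof -
  have "1 \<le> (2::nat) ^ n" by simp
  then have "real (2 ^ n - 1) + 1 = 2 ^ n" by (simp add: of_nat_diff)
  then show ?thesis by (simp add: dyadic_def rat_val_mk pow2_eq)
qed

lemma floor_pow2_eq:
  assumes "0 \<le> rat_val t"
  shows "floor_pow2 t n = nat \<lfloor>rat_val t * 2 ^ n\<rfloor>"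
proof -
  have NP: "rat_neg t \<le> rat_pos t"
    using assms unfolding rat_val_def by (simp add: divide_nonneg_pos add_pos_pos zero_le_divide_iff)
  have "rat_val t * 2 ^ n = real ((rat_pos t - rat_neg t) * 2 ^ n) / real (rat_den t + 1)"
    using NP unfolding rat_val_def by (simp add: of_nat_diff field_simps)
  then have "\<lfloor>rat_val t * 2 ^ n\<rfloor> = int (((rat_pos t - rat_neg t) * 2 ^ n) div (rat_den t + 1))"
    by (simp only: floor_divide_of_nat_eq)
  then show ?thesis unfolding floor_pow2_def by (simp add: div_search_eq pow2_eq)
qed

lemma int_decode_eq_cases:
  "int_decode a = (if even a then int (a div 2) else - int (a div 2) - 1)"
  unfolding int_decode_def sum_decode_def by simp

lemma rat_val_of_code [simp]: "rat_val (rat_of_code c) = real_of_code c"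
proof -
  have pd: "prod_decode c = (unpair1 c, unpair2 c)" by (rule prod_decode_unpair)
  show ?thesis
    unfolding rat_of_code_def real_of_code_def pd
    by (auto simp: rat_val_mk int_decode_eq_cases algebra_simps)
qed

lemma real_of_code_of_rat [simp]: "real_of_code (code_of_rat t) = rat_val t"
proof -
  let ?a = "(if rat_neg t \<le> rat_pos t then 2 * (rat_pos t - rat_neg t) else 2 * (rat_neg t - rat_pos t - 1) + 1)"
  have i: "int_decode ?a = int (rat_pos t) - int (rat_neg t)"
    by (auto simp: int_decode_eq_cases)
  have "real_of_code (code_of_rat t) = real_of_int (int_decode ?a) / (real (rat_den t) + 1)"
    unfolding code_of_rat_def real_of_code_def pair_code_def by simp
  also have "\<dots> = rat_val t" unfolding i rat_val_def by simp
  finally show ?thesis .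
qed

lemma rec3_rat_mk: "rec3 rat_mk"
  by (rule rec3I[where e="call2 pair_code (EVar 0) (call2 pair_code (EVar 1) (EVar 2))"])
     (simp_all add: rec2_pair_code rat_mk_def)
lemma rec1_rat_pos: "rec1 rat_pos" by (rule rec1I[where e="call1 unpair1 (EVar 0)"])
     (simp_all add: rec1_unpair1 rat_pos_def)
lemma rec1_rat_neg: "rec1 rat_neg" by (rule rec1I[where e="call1 unpair1 (call1 unpair2 (EVar 0))"])
     (simp_all add: rec1_unpair1 rec1_unpair2 rat_neg_def)
lemma rec1_rat_den: "rec1 rat_den" by (rule rec1I[where e="call1 unpair2 (call1 unpair2 (EVar 0))"])
     (simp_all add: rec1_unpair2 rat_den_def)

lemmas rec_rat_sel = rec3_rat_mk rec1_rat_pos rec1_rat_neg rec1_rat_den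

lemma rec2_rat_add: "rec2 rat_add"
  by (rule rec2I[where e="call3 rat_mk
     (call2 (+) (call2 (*) (call1 rat_pos (EVar 0)) (ESuc (call1 rat_den (EVar 1)))) (call2 (*) (call1 rat_pos (EVar 1)) (ESuc (call1 rat_den (EVar 0)))))
     (call2 (+) (call2 (*) (call1 rat_neg (EVar 0)) (ESuc (call1 rat_den (EVar 1)))) (call2 (*) (call1 rat_neg (EVar 1)) (ESuc (call1 rat_den (EVar 0)))))
     (call2 (-) (call2 (*) (ESuc (call1 rat_den (EVar 0))) (ESuc (call1 rat_den (EVar 1)))) (EConst 1))"])
     (simp_all add: rec_basic rec_rat_sel rat_add_def)

lemma rec1_rat_minus: "rec1 rat_minus"
  by (rule rec1I[where e="call3 rat_mk (call1 rat_neg (EVar 0)) (call1 rat_pos (EVar 0)) (call1 rat_den (EVar 0))"])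
     (simp_all add: rec_rat_sel rat_minus_def)

lemma rec2_rat_diff: "rec2 rat_diff"
  by (rule rec2I[where e="call2 rat_add (EVar 0) (call1 rat_minus (EVar 1))"])
     (simp_all add: rec2_rat_add rec1_rat_minus rat_diff_def)

lemma rec2_rat_le: "rec2 (\<lambda>a b. of_bool (rat_le a b))"
  by (rule rec2I[where e="call2 le_ind
     (call2 (+) (call2 (*) (call1 rat_pos (EVar 0)) (ESuc (call1 rat_den (EVar 1)))) (call2 (*) (call1 rat_neg (EVar 1)) (ESuc (call1 rat_den (EVar 0)))))
     (call2 (+) (call2 (*) (call1 rat_pos (EVar 1)) (ESuc (call1 rat_den (EVar 0)))) (call2 (*) (call1 rat_neg (EVar 0)) (ESuc (call1 rat_den (EVar 1)))))"])
     (simp_all add: rec_basic rec_rat_sel rat_le_def le_ind_def)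

lemma rec2_rat_less: "rec2 (\<lambda>a b. of_bool (rat_less a b))"
  by (rule rec2I[where e="call2 lt_ind
     (call2 (+) (call2 (*) (call1 rat_pos (EVar 0)) (ESuc (call1 rat_den (EVar 1)))) (call2 (*) (call1 rat_neg (EVar 1)) (ESuc (call1 rat_den (EVar 0)))))
     (call2 (+) (call2 (*) (call1 rat_pos (EVar 1)) (ESuc (call1 rat_den (EVar 0)))) (call2 (*) (call1 rat_neg (EVar 0)) (ESuc (call1 rat_den (EVar 1)))))"])
     (simp_all add: rec_basic rec_rat_sel rat_less_def lt_ind_def)

lemma rec1_rat_abs: "rec1 rat_abs"
  by (rule rec1I[where e="call3 cond (call2 (\<lambda>a b. of_bool (rat_le a b)) (EConst 0) (EVar 0)) (EVar 0) (call1 rat_minus (EVar 0))"])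
     (simp_all add: rec_basic rec2_rat_le rec1_rat_minus rat_abs_def)

lemma rec2_rat_max: "rec2 rat_max"
  by (rule rec2I[where e="call3 cond (call2 (\<lambda>a b. of_bool (rat_le a b)) (EVar 0) (EVar 1)) (EVar 1) (EVar 0)"])
     (simp_all add: rec_basic rec2_rat_le rat_max_def)

lemma rec2_dyadic: "rec2 dyadic"
  by (rule rec2I[where e="call3 rat_mk (EVar 0) (EConst 0) (call2 (-) (call1 pow2 (EVar 1)) (EConst 1))"])
     (simp_all add: rec_basic rec_rat_sel rec1_pow2 dyadic_def)

lemma rec2_floor_pow2: "rec2 floor_pow2"
  by (rule rec2I[where e="call2 div_search (call2 (*) (call2 (-) (call1 rat_pos (EVar 0)) (call1 rat_neg (EVar 0))) (call1 pow2 (EVar 1))) (ESuc (call1 rat_den (EVar 0)))"])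
     (simp_all add: rec_basic rec_rat_sel rec1_pow2 rec2_div_search floor_pow2_def)

lemma rec1_rat_of_code: "rec1 rat_of_code"
  by (rule rec1I[where e="call3 cond (call1 (\<lambda>x. of_bool (even x)) (call1 unpair1 (EVar 0)))
      (call3 rat_mk (call1 (\<lambda>x. x div 2) (call1 unpair1 (EVar 0))) (EConst 0) (call1 unpair2 (EVar 0)))
      (call3 rat_mk (EConst 0) (ESuc (call1 (\<lambda>x. x div 2) (call1 unpair1 (EVar 0)))) (call1 unpair2 (EVar 0)))"])
     (simp_all add: rec_basic rec_rat_sel rec1_unpair1 rec1_unpair2 rec1_div2 rec1_even rat_of_code_def)

lemma rec1_code_of_rat: "rec1 code_of_rat"
  by (rule rec1I[where e="call2 pair_code (call3 cond (call2 le_ind (call1 rat_neg (EVar 0)) (call1 rat_pos (EVar 0)))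
        (call2 (*) (EConst 2) (call2 (-) (call1 rat_pos (EVar 0)) (call1 rat_neg (EVar 0))))
        (ESuc (call2 (*) (EConst 2) (call2 (-) (call2 (-) (call1 rat_neg (EVar 0)) (call1 rat_pos (EVar 0))) (EConst 1)))))
      (call1 rat_den (EVar 0))"])
     (simp_all add: rec_basic rec_rat_sel rec2_pair_code code_of_rat_def le_ind_def)

lemmas rec_rat = rec_rat_sel rec2_rat_add rec1_rat_minus rec2_rat_diff rec2_rat_le rec2_rat_less rec1_rat_abs rec2_rat_max rec2_dyadic rec2_floor_pow2
   rec1_rat_of_code rec1_code_of_rat

section \<open>The stage computation\<close>

definition approx_x :: "(nat \<Rightarrow> nat) \<Rightarrow> nat \<Rightarrow> nat" where "approx_x f t = rat_of_code (f (2 * t))"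
definition enum_at :: "(nat \<Rightarrow> nat) \<Rightarrow> nat \<Rightarrow> nat" where "enum_at f m = f (2 * m + 1)"
definition ivl_lo :: "nat \<Rightarrow> nat" where "ivl_lo k = rat_of_code (unpair1 k)"
definition ivl_hi :: "nat \<Rightarrow> nat" where "ivl_hi k = rat_of_code (unpair2 k)"

text \<open>
  If the enumerated interval (a, b) meets A then d(x, A) < max |x - a| |x - b|; the extra
  2^-t absorbs the error of the approximation of x, so these bounds lie strictly above d(x, A),
  and they come arbitrarily close to it.
\<close>

definition dist_bound :: "(nat \<Rightarrow> nat) \<Rightarrow> nat \<Rightarrow> nat \<Rightarrow> nat" where
  "dist_bound f t m =
     rat_add (rat_max (rat_abs (rat_diff (approx_x f t) (ivl_lo (enum_at f m - 1))))
                      (rat_abs (rat_diff (approx_x f t) (ivl_hi (enum_at f m - 1)))))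
             (dyadic 1 t)"

text \<open>
  dist_upper f s is 0 if no interval occurs among the pairs j = (t, m) below s, and otherwise
  Suc c where c codes the least of their bounds.
\<close>

definition dist_upper_step :: "(nat \<Rightarrow> nat) \<Rightarrow> nat \<Rightarrow> nat \<Rightarrow> nat" where
  "dist_upper_step f acc j =
     (if enum_at f (unpair2 j) = 0 then acc
      else if acc = 0 then Suc (dist_bound f (unpair1 j) (unpair2 j))
      else if rat_less (dist_bound f (unpair1 j) (unpair2 j)) (acc - 1)
      then Suc (dist_bound f (unpair1 j) (unpair2 j)) else acc)"

definition dist_upper :: "(nat \<Rightarrow> nat) \<Rightarrow> nat \<Rightarrow> nat" where
  "dist_upper f s = prim_rec (dist_upper_step f) 0 s"

text \<open>
  As the upper bounds converge to d(x, A) strictly from above, their n-th binary floor is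
  eventually the n-th binary floor of d(x, A).
\<close>

definition dist_floor :: "(nat \<Rightarrow> nat) \<Rightarrow> nat \<Rightarrow> nat \<Rightarrow> nat" where
  "dist_floor f s n = (if dist_upper f s = 0 then 0 else floor_pow2 (dist_upper f s - 1) n)"

text \<open>
  Side 0 stands for the candidate x - d, side 1 for x + d; at precision n the candidate lies
  in the rational box [box_lo, box_hi] of width at most 3 * 2^-n.
\<close>

definition box_lo :: "(nat \<Rightarrow> nat) \<Rightarrow> nat \<Rightarrow> nat \<Rightarrow> nat \<Rightarrow> nat" where
  "box_lo f s side n =
     (if side = 0 then rat_diff (approx_x f n) (dyadic (dist_floor f s n + 2) n)
      else rat_diff (rat_add (approx_x f n) (dyadic (dist_floor f s n) n)) (dyadic 1 n))"
definition box_hi :: "(nat \<Rightarrow> nat) \<Rightarrow> nat \<Rightarrow> nat \<Rightarrow> nat \<Rightarrow> nat" where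
  "box_hi f s side n =
     (if side = 0 then rat_diff (rat_add (approx_x f n) (dyadic 1 n)) (dyadic (dist_floor f s n) n)
      else rat_add (approx_x f n) (dyadic (dist_floor f s n + 2) n))"

definition no_sub_step :: "(nat \<Rightarrow> nat) \<Rightarrow> nat \<Rightarrow> nat \<Rightarrow> nat \<Rightarrow> nat" where
  "no_sub_step f cc acc m =
     (if acc \<noteq> 0 \<and> (enum_at f m = 0 \<or> \<not> (rat_le (ivl_lo cc) (ivl_lo (enum_at f m - 1)) \<and>
                                             rat_le (ivl_hi (enum_at f m - 1)) (ivl_hi cc)))
      then 1 else 0)"
definition no_sub_enum :: "(nat \<Rightarrow> nat) \<Rightarrow> nat \<Rightarrow> nat \<Rightarrow> nat" where
  "no_sub_enum f s cc = prim_rec (no_sub_step f cc) 1 s"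

text \<open>
  A code k = (cc, n) certifies at stage s that the candidate is not in A if the interval cc
  contains the box at precision n and none of the first s enumerated intervals lies inside cc.
  In the limit the latter says that cc misses A, since every interval meeting A contains an
  enumerated one.
\<close>

definition certifies :: "(nat \<Rightarrow> nat) \<Rightarrow> nat \<Rightarrow> nat \<Rightarrow> nat \<Rightarrow> bool" where
  "certifies f s side k \<longleftrightarrow>
     dist_upper f s \<noteq> 0 \<and> rat_less (ivl_lo (unpair1 k)) (box_lo f s side (unpair2 k)) \<and>
     rat_less (box_hi f s side (unpair2 k)) (ivl_hi (unpair1 k)) \<and> no_sub_enum f s (unpair1 k) \<noteq> 0"

definition no_cert_before :: "(nat \<Rightarrow> nat) \<Rightarrow> nat \<Rightarrow> nat \<Rightarrow> nat \<Rightarrow> nat" where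
  "no_cert_before f s side k = prim_rec (\<lambda>acc k'. if 0 < acc \<and> \<not> certifies f s side k' then 1 else 0) 1 k"

definition first_cert :: "(nat \<Rightarrow> nat) \<Rightarrow> nat \<Rightarrow> nat \<Rightarrow> nat \<Rightarrow> nat" where
  "first_cert f s side k = of_bool (certifies f s side k \<and> no_cert_before f s side k \<noteq> 0)"

definition cand_code :: "(nat \<Rightarrow> nat) \<Rightarrow> nat \<Rightarrow> nat \<Rightarrow> nat \<Rightarrow> nat" where
  "cand_code f s side m =
     code_of_rat (if side = 0 then rat_diff (approx_x f (Suc m)) (dyadic (dist_floor f s (Suc m)) (Suc m))
                  else rat_add (approx_x f (Suc m)) (dyadic (dist_floor f s (Suc m)) (Suc m)))"

text \<open>
  Rows 0 and 1 of stage s mark the first certificate for either side, rows 2 and 3 hold the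
  approximations of the two candidates; in the limit rows 0 and 1 form an instance of LLPO,
  and rows 2 and 3 Cauchy names of the candidates.
\<close>

definition stage :: "(nat \<Rightarrow> nat) \<Rightarrow> nat \<Rightarrow> nat \<Rightarrow> nat" where
  "stage f s j =
     (if unpair1 j = 0 then first_cert f s 0 (unpair2 j)
      else if unpair1 j = 1 then first_cert f s 1 (unpair2 j)
      else if unpair1 j = 2 then cand_code f s 0 (unpair2 j)
      else if unpair1 j = 3 then cand_code f s 1 (unpair2 j) else 0)"

definition stage_code :: "nat \<Rightarrow> nat \<Rightarrow> nat" where
  "stage_code n c = stage (code_nth c) (unpair1 n) (unpair2 n)"

definition stage_assoc :: "nat \<Rightarrow> nat" where
  "stage_assoc = std_assoc (\<lambda>n. 2 * n + 4) stage_code"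

lemma rec1_ivl_lo: "rec1 ivl_lo" by (rule rec1I[where e="call1 rat_of_code (call1 unpair1 (EVar 0))"])
     (simp_all add: rec_rat rec1_unpair1 ivl_lo_def)
lemma rec1_ivl_hi: "rec1 ivl_hi" by (rule rec1I[where e="call1 rat_of_code (call1 unpair2 (EVar 0))"])
     (simp_all add: rec_rat rec1_unpair2 ivl_hi_def)

lemma rec2_approx_x: "rec2 (\<lambda>c t. approx_x (code_nth c) t)"
  by (rule rec2I[where e="call1 rat_of_code (call2 code_nth (EVar 0) (call2 (*) (EConst 2) (EVar 1)))"])
     (simp_all add: rec_rat rec_basic rec2_code_nth approx_x_def)
lemma rec2_enum_at: "rec2 (\<lambda>c m. enum_at (code_nth c) m)"
  by (rule rec2I[where e="call2 code_nth (EVar 0) (ESuc (call2 (*) (EConst 2) (EVar 1)))"])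
     (simp_all add: rec_basic rec2_code_nth enum_at_def)

lemma rec3_dist_bound: "rec3 (\<lambda>c t m. dist_bound (code_nth c) t m)"
  by (rule rec3I[where e="call2 rat_add (call2 rat_max
        (call1 rat_abs (call2 rat_diff (call2 (\<lambda>c t. approx_x (code_nth c) t) (EVar 0) (EVar 1)) (call1 ivl_lo (call2 (-) (call2 (\<lambda>c m. enum_at (code_nth c) m) (EVar 0) (EVar 2)) (EConst 1)))))
        (call1 rat_abs (call2 rat_diff (call2 (\<lambda>c t. approx_x (code_nth c) t) (EVar 0) (EVar 1)) (call1 ivl_hi (call2 (-) (call2 (\<lambda>c m. enum_at (code_nth c) m) (EVar 0) (EVar 2)) (EConst 1))))))
      (call2 dyadic (EConst 1) (EVar 1))"])
     (simp_all add: rec_rat rec_basic rec2_approx_x rec2_enum_at rec1_ivl_lo rec1_ivl_hi dist_bound_def)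

lemma rec3_dist_upper_step: "rec3 (\<lambda>c acc j. dist_upper_step (code_nth c) acc j)"
  by (rule rec3I[where e="call3 cond (call2 eq_ind (call2 (\<lambda>c m. enum_at (code_nth c) m) (EVar 0) (call1 unpair2 (EVar 2))) (EConst 0)) (EVar 1)
     (call3 cond (call2 eq_ind (EVar 1) (EConst 0)) (ESuc (call3 (\<lambda>c t m. dist_bound (code_nth c) t m) (EVar 0) (call1 unpair1 (EVar 2)) (call1 unpair2 (EVar 2))))
     (call3 cond (call2 (\<lambda>a b. of_bool (rat_less a b)) (call3 (\<lambda>c t m. dist_bound (code_nth c) t m) (EVar 0) (call1 unpair1 (EVar 2)) (call1 unpair2 (EVar 2))) (call2 (-) (EVar 1) (EConst 1)))
        (ESuc (call3 (\<lambda>c t m. dist_bound (code_nth c) t m) (EVar 0) (call1 unpair1 (EVar 2)) (call1 unpair2 (EVar 2)))) (EVar 1)))"])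
     (simp_all add: rec_rat rec_basic rec2_enum_at rec3_dist_bound rec1_unpair1 rec1_unpair2 dist_upper_step_def ind_defs)

lemma rec2_dist_upper: "rec2 (\<lambda>c s. dist_upper (code_nth c) s)"
  by (rule rec2I[where e="EPrim (EConst 0) (call3 (\<lambda>c acc j. dist_upper_step (code_nth c) acc j) (EVar 2) (EVar 0) (EVar 1)) (EVar 1)"])
     (simp_all add: rec3_dist_upper_step dist_upper_def)

lemma rec3_dist_floor: "rec3 (\<lambda>c s n. dist_floor (code_nth c) s n)"
  by (rule rec3I[where e="call3 cond (call2 eq_ind (call2 (\<lambda>c s. dist_upper (code_nth c) s) (EVar 0) (EVar 1)) (EConst 0)) (EConst 0)
        (call2 floor_pow2 (call2 (-) (call2 (\<lambda>c s. dist_upper (code_nth c) s) (EVar 0) (EVar 1)) (EConst 1)) (EVar 2))"])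
     (simp_all add: rec_rat rec_basic rec2_dist_upper dist_floor_def ind_defs)

lemma rec4_box_lo: "rec4 (\<lambda>c s side n. box_lo (code_nth c) s side n)"
  by (rule rec4I[where e="call3 cond (call2 eq_ind (EVar 2) (EConst 0))
      (call2 rat_diff (call2 (\<lambda>c t. approx_x (code_nth c) t) (EVar 0) (EVar 3)) (call2 dyadic (ESuc (ESuc (call3 (\<lambda>c s n. dist_floor (code_nth c) s n) (EVar 0) (EVar 1) (EVar 3)))) (EVar 3)))
      (call2 rat_diff (call2 rat_add (call2 (\<lambda>c t. approx_x (code_nth c) t) (EVar 0) (EVar 3)) (call2 dyadic (call3 (\<lambda>c s n. dist_floor (code_nth c) s n) (EVar 0) (EVar 1) (EVar 3)) (EVar 3))) (call2 dyadic (EConst 1) (EVar 3)))"])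
     (simp_all add: rec_rat rec_basic rec2_approx_x rec3_dist_floor box_lo_def ind_defs)

lemma rec4_box_hi: "rec4 (\<lambda>c s side n. box_hi (code_nth c) s side n)"
  by (rule rec4I[where e="call3 cond (call2 eq_ind (EVar 2) (EConst 0))
      (call2 rat_diff (call2 rat_add (call2 (\<lambda>c t. approx_x (code_nth c) t) (EVar 0) (EVar 3)) (call2 dyadic (EConst 1) (EVar 3))) (call2 dyadic (call3 (\<lambda>c s n. dist_floor (code_nth c) s n) (EVar 0) (EVar 1) (EVar 3)) (EVar 3)))
      (call2 rat_add (call2 (\<lambda>c t. approx_x (code_nth c) t) (EVar 0) (EVar 3)) (call2 dyadic (ESuc (ESuc (call3 (\<lambda>c s n. dist_floor (code_nth c) s n) (EVar 0) (EVar 1) (EVar 3)))) (EVar 3)))"])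
     (simp_all add: rec_rat rec_basic rec2_approx_x rec3_dist_floor box_hi_def ind_defs)

lemma rec4_no_sub_step: "rec4 (\<lambda>c cc acc m. no_sub_step (code_nth c) cc acc m)"
  by (rule rec4I[where e="call3 cond (call2 and_ind (EVar 2)
        (call3 cond (call2 eq_ind (call2 (\<lambda>c m. enum_at (code_nth c) m) (EVar 0) (EVar 3)) (EConst 0)) (EConst 1)
          (call1 not_ind (call2 and_ind (call2 (\<lambda>a b. of_bool (rat_le a b)) (call1 ivl_lo (EVar 1)) (call1 ivl_lo (call2 (-) (call2 (\<lambda>c m. enum_at (code_nth c) m) (EVar 0) (EVar 3)) (EConst 1))))
                            (call2 (\<lambda>a b. of_bool (rat_le a b)) (call1 ivl_hi (call2 (-) (call2 (\<lambda>c m. enum_at (code_nth c) m) (EVar 0) (EVar 3)) (EConst 1))) (call1 ivl_hi (EVar 1)))))))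
      (EConst 1) (EConst 0)"])
     (simp_all add: rec_rat rec_basic rec2_enum_at rec1_ivl_lo rec1_ivl_hi no_sub_step_def ind_defs)

lemma rec3_no_sub_enum: "rec3 (\<lambda>c s cc. no_sub_enum (code_nth c) s cc)"
  by (rule rec3I[where e="EPrim (EConst 1) (call4 (\<lambda>c cc acc m. no_sub_step (code_nth c) cc acc m) (EVar 2) (EVar 4) (EVar 0) (EVar 1)) (EVar 1)"])
     (simp_all add: rec4_no_sub_step no_sub_enum_def)

lemma rec4_certifies: "rec4 (\<lambda>c s side k. of_bool (certifies (code_nth c) s side k))"
  by (rule rec4I[where e="call2 and_ind (call1 not_ind (call2 eq_ind (call2 (\<lambda>c s. dist_upper (code_nth c) s) (EVar 0) (EVar 1)) (EConst 0)))
     (call2 and_ind (call2 (\<lambda>a b. of_bool (rat_less a b)) (call1 ivl_lo (call1 unpair1 (EVar 3))) (call4 (\<lambda>c s side n. box_lo (code_nth c) s side n) (EVar 0) (EVar 1) (EVar 2) (call1 unpair2 (EVar 3))))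
      (call2 and_ind (call2 (\<lambda>a b. of_bool (rat_less a b)) (call4 (\<lambda>c s side n. box_hi (code_nth c) s side n) (EVar 0) (EVar 1) (EVar 2) (call1 unpair2 (EVar 3))) (call1 ivl_hi (call1 unpair1 (EVar 3))))
        (call3 (\<lambda>c s cc. no_sub_enum (code_nth c) s cc) (EVar 0) (EVar 1) (call1 unpair1 (EVar 3)))))"])
     (simp_all add: rec_rat rec_basic rec2_dist_upper rec1_ivl_lo rec1_ivl_hi rec4_box_lo rec4_box_hi rec3_no_sub_enum rec1_unpair1 rec1_unpair2 certifies_def ind_defs)

lemma rec5_no_cert_before_step: "rec5 (\<lambda>c s side acc k'. if 0 < acc \<and> \<not> certifies (code_nth c) s side k' then 1 else 0)"
  by (rule rec5I[where e="call3 cond (call2 and_ind (EVar 3) (call1 not_ind (call4 (\<lambda>c s side k. of_bool (certifies (code_nth c) s side k)) (EVar 0) (EVar 1) (EVar 2) (EVar 4)))) (EConst 1) (EConst 0)"])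
     (simp_all add: rec_basic rec4_certifies ind_defs)

lemma rec4_no_cert_before: "rec4 (\<lambda>c s side k. no_cert_before (code_nth c) s side k)"
  by (rule rec4I[where e="EPrim (EConst 1) (call5 (\<lambda>c s side acc k'. if 0 < acc \<and> \<not> certifies (code_nth c) s side k' then 1 else 0) (EVar 2) (EVar 3) (EVar 4) (EVar 0) (EVar 1)) (EVar 3)"])
     (simp_all add: rec5_no_cert_before_step no_cert_before_def)

lemma rec4_first_cert: "rec4 (\<lambda>c s side k. first_cert (code_nth c) s side k)"
  by (rule rec4I[where e="call2 and_ind (call4 (\<lambda>c s side k. of_bool (certifies (code_nth c) s side k)) (EVar 0) (EVar 1) (EVar 2) (EVar 3))
         (call4 (\<lambda>c s side k. no_cert_before (code_nth c) s side k) (EVar 0) (EVar 1) (EVar 2) (EVar 3))"])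
     (simp_all add: rec_basic rec4_certifies rec4_no_cert_before first_cert_def ind_defs)

lemma rec4_cand_code: "rec4 (\<lambda>c s side m. cand_code (code_nth c) s side m)"
  by (rule rec4I[where e="call1 code_of_rat (call3 cond (call2 eq_ind (EVar 2) (EConst 0))
       (call2 rat_diff (call2 (\<lambda>c t. approx_x (code_nth c) t) (EVar 0) (ESuc (EVar 3))) (call2 dyadic (call3 (\<lambda>c s n. dist_floor (code_nth c) s n) (EVar 0) (EVar 1) (ESuc (EVar 3))) (ESuc (EVar 3))))
       (call2 rat_add (call2 (\<lambda>c t. approx_x (code_nth c) t) (EVar 0) (ESuc (EVar 3))) (call2 dyadic (call3 (\<lambda>c s n. dist_floor (code_nth c) s n) (EVar 0) (EVar 1) (ESuc (EVar 3))) (ESuc (EVar 3)))))"])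
     (simp_all add: rec_rat rec_basic rec2_approx_x rec3_dist_floor cand_code_def ind_defs)

lemma rec2_stage_code: "rec2 stage_code"
  by (rule rec2I[where e="call3 cond (call2 eq_ind (call1 unpair1 (call1 unpair2 (EVar 0))) (EConst 0)) (call4 (\<lambda>c s side k. first_cert (code_nth c) s side k) (EVar 1) (call1 unpair1 (EVar 0)) (EConst 0) (call1 unpair2 (call1 unpair2 (EVar 0))))
     (call3 cond (call2 eq_ind (call1 unpair1 (call1 unpair2 (EVar 0))) (EConst 1)) (call4 (\<lambda>c s side k. first_cert (code_nth c) s side k) (EVar 1) (call1 unpair1 (EVar 0)) (EConst 1) (call1 unpair2 (call1 unpair2 (EVar 0))))
     (call3 cond (call2 eq_ind (call1 unpair1 (call1 unpair2 (EVar 0))) (EConst 2)) (call4 (\<lambda>c s side m. cand_code (code_nth c) s side m) (EVar 1) (call1 unpair1 (EVar 0)) (EConst 0) (call1 unpair2 (call1 unpair2 (EVar 0))))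
     (call3 cond (call2 eq_ind (call1 unpair1 (call1 unpair2 (EVar 0))) (EConst 3)) (call4 (\<lambda>c s side m. cand_code (code_nth c) s side m) (EVar 1) (call1 unpair1 (EVar 0)) (EConst 1) (call1 unpair2 (call1 unpair2 (EVar 0))))
      (EConst 0))))"])
     (simp_all add: rec_basic rec4_first_cert rec4_cand_code rec1_unpair1 rec1_unpair2 stage_code_def stage_def ind_defs)

lemma computable_stage_assoc: "computable_nat stage_assoc"
  unfolding stage_assoc_def
  by (rule computable_std_assoc[OF _ rec2_stage_code], rule rec1I[where e="call2 (+) (call2 (*) (EConst 2) (EVar 0)) (EConst 4)"])
     (simp_all add: rec_basic)

context
  fixes f g :: "nat \<Rightarrow> nat" and N :: nat
  assumes agree: "\<And>i. i < N \<Longrightarrow> f i = g i"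
begin

lemma approx_x_loc: "2 * t < N \<Longrightarrow> approx_x f t = approx_x g t"
  by (simp add: approx_x_def agree)
lemma enum_at_loc: "2 * m + 1 < N \<Longrightarrow> enum_at f m = enum_at g m"
  by (simp add: enum_at_def agree)
lemma dist_bound_loc: "2 * t < N \<Longrightarrow> 2 * m + 1 < N \<Longrightarrow> dist_bound f t m = dist_bound g t m"
  by (simp add: dist_bound_def approx_x_loc enum_at_loc)

lemma dist_upper_loc: "2 * s \<le> N \<Longrightarrow> dist_upper f s = dist_upper g s"
proof (induction s)
  case 0 then show ?case by (simp add: dist_upper_def)
next
  case (Suc s)
  have a: "2 * unpair1 s < N" "2 * unpair2 s + 1 < N" using unpair_le[of s] Suc.prems by (simp_all only: mult_Suc_right)
  have "dist_upper_step f acc s = dist_upper_step g acc s" for acc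
    unfolding dist_upper_step_def using enum_at_loc[OF a(2)] dist_bound_loc[OF a] by simp
  then show ?case using Suc by (simp add: dist_upper_def)
qed

lemma dist_floor_loc: "2 * s \<le> N \<Longrightarrow> dist_floor f s n = dist_floor g s n"
  by (simp add: dist_floor_def dist_upper_loc)

lemma box_lo_loc: "2 * s \<le> N \<Longrightarrow> 2 * n < N \<Longrightarrow> box_lo f s side n = box_lo g s side n"
  by (simp add: box_lo_def dist_floor_loc approx_x_loc)
lemma box_hi_loc: "2 * s \<le> N \<Longrightarrow> 2 * n < N \<Longrightarrow> box_hi f s side n = box_hi g s side n"
  by (simp add: box_hi_def dist_floor_loc approx_x_loc)

lemma no_sub_enum_loc: "2 * s \<le> N \<Longrightarrow> no_sub_enum f s cc = no_sub_enum g s cc"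
proof (induction s)
  case 0 then show ?case by (simp add: no_sub_enum_def)
next
  case (Suc s)
  have a: "2 * s + 1 < N" using Suc.prems by (simp only: mult_Suc_right)
  have "no_sub_step f cc acc s = no_sub_step g cc acc s" for acc
    unfolding no_sub_step_def using enum_at_loc[OF a] by simp
  then show ?case using Suc by (simp add: no_sub_enum_def)
qed

lemma certifies_loc: "2 * s \<le> N \<Longrightarrow> 2 * k < N \<Longrightarrow> certifies f s side k = certifies g s side k"
proof -
  assume a: "2 * s \<le> N" "2 * k < N"
  have "2 * unpair2 k < N" using unpair_le[of k] a by linarith
  then show ?thesis unfolding certifies_def using a by (simp add: dist_upper_loc box_lo_loc box_hi_loc no_sub_enum_loc)
qed

lemma no_cert_before_loc: "2 * s \<le> N \<Longrightarrow> 2 * k \<le> N \<Longrightarrow> no_cert_before f s side k = no_cert_before g s side k"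
proof (induction k)
  case 0 then show ?case by (simp add: no_cert_before_def)
next
  case (Suc k)
  have "certifies f s side k = certifies g s side k" using Suc.prems by (intro certifies_loc) (simp_all only: mult_Suc_right)
  then show ?case using Suc by (simp add: no_cert_before_def)
qed

lemma first_cert_loc: "2 * s \<le> N \<Longrightarrow> 2 * k < N \<Longrightarrow> first_cert f s side k = first_cert g s side k"
  by (simp add: first_cert_def certifies_loc no_cert_before_loc)

lemma cand_code_loc: "2 * s \<le> N \<Longrightarrow> 2 * m + 2 < N \<Longrightarrow> cand_code f s side m = cand_code g s side m"
proof -
  assume a: "2 * s \<le> N" "2 * m + 2 < N"
  then have "2 * Suc m < N" by simp
  then show ?thesis unfolding cand_code_def using a by (simp add: dist_floor_loc approx_x_loc)
qed

lemma stage_loc: "2 * s \<le> N \<Longrightarrow> 2 * unpair2 j + 2 < N \<Longrightarrow> stage f s j = stage g s j"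
  unfolding stage_def by (simp add: first_cert_loc cand_code_loc)

end

lemma tt_stage_assoc: "tt_apply stage_assoc p = Some (\<lambda>n. stage p (unpair1 n) (unpair2 n))"
proof -
  have "stage_code n (list_encode (map p [0..<2 * n + 4])) = stage p (unpair1 n) (unpair2 n)" for n
  proof -
    have ag: "\<And>i. i < 2 * n + 4 \<Longrightarrow> code_nth (list_encode (map p [0..<2 * n + 4])) i = p i"
      by (rule code_nth_prefix)
    have "unpair1 n \<le> n" "unpair2 (unpair2 n) \<le> n" using unpair_le[of n] unpair_le[of "unpair2 n"] by linarith+
    then show ?thesis unfolding stage_code_def
      by (intro stage_loc[where N="2 * n + 4", OF ag]) linarith+
  qed
  then show ?thesis unfolding stage_assoc_def tt_apply_std_assoc by simp
qed

lemma half_pow_less: "0 < (e::real) \<Longrightarrow> \<exists>n. (1/2::real) ^ n < e"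
  by (rule real_arch_pow_inv) simp_all

lemma real_of_code_rat: "real_of_code c \<in> \<rat>"
  by (simp add: real_of_code_def case_prod_beta)

lemma real_of_code_surj: "r \<in> \<rat> \<Longrightarrow> \<exists>c. real_of_code c = r"
proof -
  assume "r \<in> \<rat>"
  then obtain a b where ab: "b > 0" "r = of_int a / of_int b" by (rule Rats_cases')
  have "real_of_code (prod_encode (int_encode a, nat b - 1)) = r"
    using ab by (simp add: real_of_code_def of_nat_diff)
  then show ?thesis by blast
qed

lemma cauchy_rep_intro:
  assumes "\<And>n. \<bar>real_of_code (q n) - y\<bar> \<le> (1/2) ^ n"
  shows "cauchy_rep q = Some y"
proof -
  have uniq: "z = y" if z: "\<forall>n. \<bar>real_of_code (q n) - z\<bar> \<le> (1/2) ^ n" for z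
  proof (rule ccontr)
    assume "z \<noteq> y"
    then have "0 < \<bar>z - y\<bar> / 2" by simp
    then obtain n where n: "(1/2::real) ^ n < \<bar>z - y\<bar> / 2" using half_pow_less by blast
    have "\<bar>z - y\<bar> \<le> \<bar>real_of_code (q n) - z\<bar> + \<bar>real_of_code (q n) - y\<bar>" by linarith
    also have "\<dots> \<le> 2 * (1/2) ^ n" using z[rule_format, of n] assms[of n] by linarith
    finally show False using n by simp
  qed
  have "(THE z. \<forall>n. \<bar>real_of_code (q n) - z\<bar> \<le> (1/2) ^ n) = y"
    by (rule the_equality) (use assms uniq in auto)
  then show ?thesis unfolding cauchy_rep_def using assms by auto
qed

lemma cauchy_rep_elim:
  assumes "cauchy_rep q = Some y"
  shows "\<bar>real_of_code (q n) - y\<bar> \<le> (1/2) ^ n"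
proof -
  obtain z where z: "\<forall>n. \<bar>real_of_code (q n) - z\<bar> \<le> (1/2) ^ n"
    using assms unfolding cauchy_rep_def by (auto split: if_splits)
  have "cauchy_rep q = Some z" by (rule cauchy_rep_intro) (use z in auto)
  then show ?thesis using assms z by simp
qed

lemma names_closed_pos_meets:
  assumes "names_closed_pos e A" "e m = Suc k"
  shows "fst (ivl_of_code k) < snd (ivl_of_code k) \<and>
         (\<exists>y\<in>A. fst (ivl_of_code k) < y \<and> y < snd (ivl_of_code k))"
proof -
  have "ivl_of_code k \<in> {ivl_of_code k | k. Suc k \<in> range e}"
    using assms(2) by (metis (mono_tags, lifting) mem_Collect_eq rangeI)
  then show ?thesis
    using assms(1) unfolding names_closed_pos_def by (auto simp: case_prod_beta)
qed

lemma names_closed_pos_enumerates: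
  assumes "names_closed_pos e A" "a \<in> \<rat>" "b \<in> \<rat>" "y \<in> A" "a < y" "y < b"
  shows "\<exists>m k. e m = Suc k \<and> ivl_of_code k = (a, b)"
proof -
  have "(a, b) \<in> {ivl_of_code k | k. Suc k \<in> range e}"
    using assms unfolding names_closed_pos_def by auto
  then show ?thesis by (auto simp: eq_commute)
qed

lemma names_closed_pos_subset:
  assumes "closed B" "names_closed_pos e A" "names_closed_pos e B"
  shows "A \<subseteq> B"
proof
  fix y assume "y \<in> A"
  show "y \<in> B"
  proof (rule ccontr)
    assume "y \<notin> B"
    then obtain r where r: "0 < r" "\<And>z. dist z y < r \<Longrightarrow> z \<notin> B"
      using assms(1) unfolding closed_def open_dist by blast
    obtain a where a: "a \<in> \<rat>" "y - r < a" "a < y" using Rats_dense_in_real[of "y - r" y] r by auto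
    obtain b where b: "b \<in> \<rat>" "y < b" "b < y + r" using Rats_dense_in_real[of y "y + r"] r by auto
    obtain m k where "e m = Suc k" "ivl_of_code k = (a, b)"
      using names_closed_pos_enumerates[OF assms(2) a(1) b(1) \<open>y \<in> A\<close> a(3) b(2)] by blast
    then obtain z where "z \<in> B" "a < z" "z < b"
      using names_closed_pos_meets[OF assms(3)] by fastforce
    then show False using r(2) a b by (auto simp: dist_real_def)
  qed
qed

lemma closed_pos_rep_elim:
  assumes "closed_pos_rep e = Some A"
  shows "closed A \<and> names_closed_pos e A"
proof -
  obtain B where B: "closed B" "names_closed_pos e B"
    using assms unfolding closed_pos_rep_def by (auto split: if_splits)
  have "(THE A. closed A \<and> names_closed_pos e A) = B"
    by (rule the_equality) (use B names_closed_pos_subset in blast)+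
  then show ?thesis
    using assms B unfolding closed_pos_rep_def by (auto split: if_splits)
qed

section \<open>Convergence of the stages\<close>

lemma rat_val_ivl_lo: "rat_val (ivl_lo k) = fst (ivl_of_code k)"
  by (simp add: ivl_lo_def ivl_of_code_def prod_decode_unpair)
lemma rat_val_ivl_hi: "rat_val (ivl_hi k) = snd (ivl_of_code k)"
  by (simp add: ivl_hi_def ivl_of_code_def prod_decode_unpair)

lemma ivl_lo_rat: "rat_val (ivl_lo k) \<in> \<rat>"
  by (simp add: ivl_lo_def real_of_code_rat)
lemma ivl_hi_rat: "rat_val (ivl_hi k) \<in> \<rat>"
  by (simp add: ivl_hi_def real_of_code_rat)

lemma ivl_code_exists: "a \<in> \<rat> \<Longrightarrow> b \<in> \<rat> \<Longrightarrow> \<exists>k. rat_val (ivl_lo k) = a \<and> rat_val (ivl_hi k) = b"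
proof -
  assume "a \<in> \<rat>" "b \<in> \<rat>"
  then obtain ca cb where "real_of_code ca = a" "real_of_code cb = b" using real_of_code_surj by metis
  then have "rat_val (ivl_lo (pair_code ca cb)) = a \<and> rat_val (ivl_hi (pair_code ca cb)) = b"
    by (simp add: ivl_lo_def ivl_hi_def)
  then show ?thesis by blast
qed

lemma rat_val_dyadic': "rat_val (dyadic k n) = real k * (1/2) ^ n"
  by (simp add: power_one_over)

lemma no_cert_before_iff: "0 < no_cert_before f s side k \<longleftrightarrow> (\<forall>k'<k. \<not> certifies f s side k')"
proof (induction k)
  case 0 then show ?case by (simp add: no_cert_before_def)
next
  case (Suc k)
  have "no_cert_before f s side (Suc k) = (if 0 < no_cert_before f s side k \<and> \<not> certifies f s side k then 1 else 0)"
    by (simp add: no_cert_before_def)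
  then show ?case using Suc by (auto simp: less_Suc_eq)
qed

lemma abs_diff_less_max: "a < y \<Longrightarrow> y < b \<Longrightarrow> \<bar>x - y\<bar> < max \<bar>x - a\<bar> \<bar>x - b\<bar>" for x y a b :: real
  by (cases "y \<le> x") (auto simp: max_def abs_if)

lemma baire_lim_eventually_eq:
  assumes "\<And>j. eventually (\<lambda>i. s i j = w j) sequentially"
  shows "baire_lim s = {w}"
proof
  show "{w} \<subseteq> baire_lim s"
  proof (clarsimp simp: baire_lim_def)
    fix k
    have "eventually (\<lambda>i. \<forall>n\<in>{..<k}. s i n = w n) sequentially"
      by (rule eventually_ball_finite) (auto intro: assms)
    then show "\<exists>N. \<forall>i\<ge>N. \<forall>n<k. s i n = w n"
      unfolding eventually_sequentially by auto
  qed
  show "baire_lim s \<subseteq> {w}"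
  proof (clarsimp simp: baire_lim_def)
    fix q assume q: "\<forall>k. \<exists>N. \<forall>i\<ge>N. \<forall>n<k. s i n = q n"
    show "q = w"
    proof
      fix n
      have "eventually (\<lambda>i. s i n = q n) sequentially"
        using q[rule_format, of "Suc n"] unfolding eventually_sequentially by auto
      then have "eventually (\<lambda>i. q n = w n) sequentially"
        using assms[of n] by eventually_elim simp
      then show "q n = w n" by simp
    qed
  qed
qed

locale proj_instance =
  fixes p :: "nat \<Rightarrow> nat" and x :: real and A :: "real set"
  assumes x_name: "\<And>t. \<bar>real_of_code (p (2 * t)) - x\<bar> \<le> (1/2) ^ t"
    and A_name: "names_closed_pos (\<lambda>m. p (2 * m + 1)) A"
    and A_closed: "closed A" and A_nonempty: "A \<noteq> {}"
begin

definition d :: real where "d = infdist x A"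

lemma d_nonneg: "0 \<le> d" by (simp add: d_def infdist_nonneg)

lemma d_le: "y \<in> A \<Longrightarrow> d \<le> \<bar>x - y\<bar>"
  unfolding d_def using infdist_le[of y A x] by (simp add: dist_real_def)

lemma nearest: "\<exists>y\<in>A. \<bar>x - y\<bar> = d"
  using infdist_attains_inf[OF A_closed A_nonempty, of x] unfolding d_def dist_real_def by metis

lemma approx_x_close: "\<bar>rat_val (approx_x p t) - x\<bar> \<le> (1/2) ^ t"
  using x_name[of t] by (simp add: approx_x_def)

lemma enum_at_meets:
  assumes "enum_at p m = Suc k"
  shows "\<exists>y\<in>A. rat_val (ivl_lo k) < y \<and> y < rat_val (ivl_hi k)"
  using names_closed_pos_meets[OF A_name, of m k] assms
  by (simp add: enum_at_def rat_val_ivl_lo rat_val_ivl_hi)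

lemma meets_enum_at:
  assumes "a \<in> \<rat>" "b \<in> \<rat>" "y \<in> A" "a < y" "y < b"
  shows "\<exists>m k. enum_at p m = Suc k \<and> rat_val (ivl_lo k) = a \<and> rat_val (ivl_hi k) = b"
  using names_closed_pos_enumerates[OF A_name assms]
  by (simp add: enum_at_def rat_val_ivl_lo rat_val_ivl_hi) (metis fst_conv snd_conv)

definition enumerated :: "nat \<Rightarrow> bool" where "enumerated j \<longleftrightarrow> enum_at p (unpair2 j) \<noteq> 0"
definition bound_of :: "nat \<Rightarrow> real" where "bound_of j = rat_val (dist_bound p (unpair1 j) (unpair2 j))"

lemma bound_of_eq:
  assumes "enum_at p m = Suc k"
  shows "rat_val (dist_bound p t m) =
    max \<bar>rat_val (approx_x p t) - rat_val (ivl_lo k)\<bar> \<bar>rat_val (approx_x p t) - rat_val (ivl_hi k)\<bar> + (1/2) ^ t"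
  using assms by (simp add: dist_bound_def power_one_over)

lemma d_less_bound_of: "enumerated j \<Longrightarrow> d < bound_of j"
proof -
  assume "enumerated j"
  then obtain k where k: "enum_at p (unpair2 j) = Suc k" unfolding enumerated_def by (cases "enum_at p (unpair2 j)") auto
  let ?t = "unpair1 j"
  let ?a = "rat_val (ivl_lo k)" and ?b = "rat_val (ivl_hi k)" and ?xt = "rat_val (approx_x p ?t)"
  obtain y where y: "y \<in> A" "?a < y" "y < ?b" using enum_at_meets[OF k] by blast
  have "d \<le> \<bar>x - y\<bar>" by (rule d_le[OF y(1)])
  also have "\<dots> < max \<bar>x - ?a\<bar> \<bar>x - ?b\<bar>" by (rule abs_diff_less_max[OF y(2,3)])
  also have "\<dots> \<le> max \<bar>?xt - ?a\<bar> \<bar>?xt - ?b\<bar> + (1/2) ^ ?t"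
    using approx_x_close[of ?t] by (simp add: max_def abs_if split: if_splits) linarith?
  also have "\<dots> = bound_of j" unfolding bound_of_def using bound_of_eq[OF k] by simp
  finally show ?thesis .
qed

lemma dist_upper_Suc:
  "dist_upper p (Suc s) =
     (if enumerated s \<and> (dist_upper p s = 0 \<or> bound_of s < rat_val (dist_upper p s - 1))
      then Suc (dist_bound p (unpair1 s) (unpair2 s)) else dist_upper p s)"
  by (auto simp: dist_upper_def dist_upper_step_def enumerated_def bound_of_def rat_less_iff)

lemma dist_upper_is_min:
  "(dist_upper p s = 0 \<longleftrightarrow> (\<forall>j<s. \<not> enumerated j)) \<and>
   (dist_upper p s \<noteq> 0 \<longrightarrow> (\<exists>j<s. enumerated j \<and> rat_val (dist_upper p s - 1) = bound_of j) \<and>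
                             (\<forall>j<s. enumerated j \<longrightarrow> rat_val (dist_upper p s - 1) \<le> bound_of j))"
proof (induction s)
  case 0 then show ?case by (simp add: dist_upper_def)
next
  case (Suc s)
  show ?case
  proof (cases "enumerated s \<and> (dist_upper p s = 0 \<or> bound_of s < rat_val (dist_upper p s - 1))")
    case True
    then show ?thesis
      using Suc unfolding dist_upper_Suc by (fastforce simp: less_Suc_eq bound_of_def)
  next
    case False
    then show ?thesis
      using Suc unfolding dist_upper_Suc by (fastforce simp: less_Suc_eq)
  qed
qed

lemma d_less_dist_upper: "dist_upper p s \<noteq> 0 \<Longrightarrow> d < rat_val (dist_upper p s - 1)"
  using dist_upper_is_min[of s] d_less_bound_of by force

lemma dist_upper_converges:
  assumes "0 < e"
  shows "\<exists>s0. \<forall>s\<ge>s0. dist_upper p s \<noteq> 0 \<and> rat_val (dist_upper p s - 1) < d + e"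
proof -
  obtain y where y: "y \<in> A" "\<bar>x - y\<bar> = d" using nearest by blast
  obtain a where a: "a \<in> \<rat>" "y - e/4 < a" "a < y" using Rats_dense_in_real[of "y - e/4" y] assms by auto
  obtain b where b: "b \<in> \<rat>" "y < b" "b < y + e/4" using Rats_dense_in_real[of y "y + e/4"] assms by auto
  obtain m k where mk: "enum_at p m = Suc k" "rat_val (ivl_lo k) = a" "rat_val (ivl_hi k) = b"
    using meets_enum_at[OF a(1) b(1) y(1) a(3) b(2)] by blast
  obtain t where t: "(1/2::real) ^ t < e/4" using half_pow_less[of "e/4"] assms by auto
  let ?j = "prod_encode (t, m)"
  have enum_j: "enumerated ?j" using mk by (simp add: enumerated_def)
  have "bound_of ?j = max \<bar>rat_val (approx_x p t) - a\<bar> \<bar>rat_val (approx_x p t) - b\<bar> + (1/2) ^ t"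
    unfolding bound_of_def using bound_of_eq[OF mk(1)] mk by simp
  also have "\<dots> \<le> max \<bar>x - a\<bar> \<bar>x - b\<bar> + 2 * (1/2) ^ t"
    using approx_x_close[of t] by (simp add: max_def abs_if split: if_splits) linarith?
  also have "\<dots> < d + e"
    using y(2) a b t by (simp add: max_def abs_if split: if_splits) linarith?
  finally have bound_j: "bound_of ?j < d + e" .
  show ?thesis
  proof (intro exI allI impI)
    fix s assume "Suc ?j \<le> s"
    then have js: "?j < s" by simp
    then have "dist_upper p s \<noteq> 0" using dist_upper_is_min[of s] enum_j by blast
    moreover have "rat_val (dist_upper p s - 1) \<le> bound_of ?j"
      using dist_upper_is_min[of s] enum_j js calculation by blast
    ultimately show "dist_upper p s \<noteq> 0 \<and> rat_val (dist_upper p s - 1) < d + e"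
      using bound_j by simp
  qed
qed

definition d_floor :: "nat \<Rightarrow> nat" where "d_floor n = nat \<lfloor>d * 2 ^ n\<rfloor>"

lemma d_floor_bounds: "real (d_floor n) \<le> d * 2 ^ n" "d * 2 ^ n < real (d_floor n) + 1"
proof -
  have nn: "0 \<le> \<lfloor>d * 2 ^ n\<rfloor>" using d_nonneg by simp
  have r: "real (d_floor n) = of_int \<lfloor>d * 2 ^ n\<rfloor>" unfolding d_floor_def using nn by simp
  show "real (d_floor n) \<le> d * 2 ^ n" unfolding r by simp
  show "d * 2 ^ n < real (d_floor n) + 1" unfolding r by linarith
qed

lemma d_floor_bounds': "real (d_floor n) * (1/2) ^ n \<le> d" "d < (real (d_floor n) + 1) * (1/2) ^ n"
proof -
  have p: "(0::real) < 2 ^ n" by simp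
  show "real (d_floor n) * (1/2) ^ n \<le> d" using d_floor_bounds(1)[of n] p
    by (simp add: power_one_over field_simps)
  show "d < (real (d_floor n) + 1) * (1/2) ^ n" using d_floor_bounds(2)[of n] p
    by (simp add: power_one_over field_simps)
qed

lemma eventually_dist_upper_nonzero: "eventually (\<lambda>s. dist_upper p s \<noteq> 0) sequentially"
  using dist_upper_converges[of 1] unfolding eventually_sequentially by auto

lemma eventually_dist_floor: "eventually (\<lambda>s. dist_floor p s n = d_floor n) sequentially"
proof -
  let ?e = "(real (d_floor n) + 1) / 2 ^ n - d"
  have e: "0 < ?e" using d_floor_bounds(2)[of n] by (simp add: field_simps)
  obtain s0 where s0: "\<And>s. s \<ge> s0 \<Longrightarrow> dist_upper p s \<noteq> 0 \<and> rat_val (dist_upper p s - 1) < d + ?e"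
    using dist_upper_converges[OF e] by blast
  have "dist_floor p s n = d_floor n" if s: "s \<ge> s0" for s
  proof -
    let ?D = "rat_val (dist_upper p s - 1)"
    have nz: "dist_upper p s \<noteq> 0" and lt: "?D < d + ?e" using s0[OF s] by auto
    have gt: "d < ?D" by (rule d_less_dist_upper[OF nz])
    have p2: "(0::real) < 2 ^ n" by simp
    have up: "?D * 2 ^ n < real (d_floor n) + 1" using lt p2 by (simp add: field_simps)
    have lowr: "d * 2 ^ n < ?D * 2 ^ n" using gt p2 by simp
    have lo2: "real (d_floor n) \<le> ?D * 2 ^ n" using d_floor_bounds(1)[of n] lowr by linarith
    have "\<lfloor>?D * 2 ^ n\<rfloor> = int (d_floor n)"
      unfolding floor_eq_iff using lo2 up by simp
    then show ?thesis unfolding dist_floor_def using nz gt d_nonneg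
      by (simp add: floor_pow2_eq)
  qed
  then show ?thesis unfolding eventually_sequentially by blast
qed

definition tol :: "nat \<Rightarrow> real" where "tol n = (1/2) ^ n"
definition x_val :: "nat \<Rightarrow> real" where "x_val n = rat_val (approx_x p n)"

definition box_lo_val :: "nat \<Rightarrow> nat \<Rightarrow> real" where
  "box_lo_val side n = (if side = 0 then x_val n - (real (d_floor n) + 2) * tol n else x_val n + real (d_floor n) * tol n - tol n)"
definition box_hi_val :: "nat \<Rightarrow> nat \<Rightarrow> real" where
  "box_hi_val side n = (if side = 0 then x_val n + tol n - real (d_floor n) * tol n else x_val n + (real (d_floor n) + 2) * tol n)"

lemma rat_val_dyadic_tol: "rat_val (dyadic k n) = real k * tol n"
  unfolding tol_def by (rule rat_val_dyadic')

lemma rat_val_box_lo: "dist_floor p s n = d_floor n \<Longrightarrow> rat_val (box_lo p s side n) = box_lo_val side n"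
  unfolding box_lo_def box_lo_val_def
  by (cases "side = 0") (simp_all del: rat_val_dyadic add: rat_val_dyadic_tol x_val_def algebra_simps)
lemma rat_val_box_hi: "dist_floor p s n = d_floor n \<Longrightarrow> rat_val (box_hi p s side n) = box_hi_val side n"
  unfolding box_hi_def box_hi_val_def
  by (cases "side = 0") (simp_all del: rat_val_dyadic add: rat_val_dyadic_tol x_val_def algebra_simps)

lemma no_sub_enum_iff:
  "no_sub_enum p s cc \<noteq> 0 \<longleftrightarrow> (\<forall>m<s. enum_at p m = 0 \<or> \<not> (rat_val (ivl_lo cc) \<le> rat_val (ivl_lo (enum_at p m - 1)) \<and> rat_val (ivl_hi (enum_at p m - 1)) \<le> rat_val (ivl_hi cc)))"
proof (induction s)
  case 0 then show ?case by (simp add: no_sub_enum_def)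
next
  case (Suc s)
  have "no_sub_enum p (Suc s) cc = no_sub_step p cc (no_sub_enum p s cc) s" by (simp add: no_sub_enum_def)
  then show ?case using Suc by (auto simp: no_sub_step_def rat_le_iff less_Suc_eq)
qed

definition misses_A :: "nat \<Rightarrow> bool" where
  "misses_A cc \<longleftrightarrow> (\<forall>y\<in>A. \<not> (rat_val (ivl_lo cc) < y \<and> y < rat_val (ivl_hi cc)))"

lemma eventually_no_sub_enum: "eventually (\<lambda>s. (no_sub_enum p s cc \<noteq> 0) = misses_A cc) sequentially"
proof (cases "misses_A cc")
  case True
  have "no_sub_enum p s cc \<noteq> 0" for s
    unfolding no_sub_enum_iff
  proof (intro allI impI)
    fix m assume "m < s"
    show "enum_at p m = 0 \<or> \<not> (rat_val (ivl_lo cc) \<le> rat_val (ivl_lo (enum_at p m - 1)) \<and> rat_val (ivl_hi (enum_at p m - 1)) \<le> rat_val (ivl_hi cc))"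
    proof (cases "enum_at p m")
      case (Suc k)
      obtain y where "y \<in> A" "rat_val (ivl_lo k) < y" "y < rat_val (ivl_hi k)" using enum_at_meets[OF Suc] by blast
      then show ?thesis using True Suc unfolding misses_A_def by force
    qed simp
  qed
  then show ?thesis using True by simp
next
  case False
  then obtain y where y: "y \<in> A" "rat_val (ivl_lo cc) < y" "y < rat_val (ivl_hi cc)"
    unfolding misses_A_def by blast
  obtain m k where mk: "enum_at p m = Suc k"
      "rat_val (ivl_lo k) = rat_val (ivl_lo cc)" "rat_val (ivl_hi k) = rat_val (ivl_hi cc)"
    using meets_enum_at[OF ivl_lo_rat ivl_hi_rat y] by blast
  have "no_sub_enum p s cc = 0" if "m < s" for s
    using no_sub_enum_iff[of s cc] mk that by force
  then show ?thesis
    using False unfolding eventually_sequentially by (intro exI[of _ "Suc m"]) simp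
qed

definition Cert :: "nat \<Rightarrow> nat \<Rightarrow> bool" where
  "Cert side k \<longleftrightarrow> rat_val (ivl_lo (unpair1 k)) < box_lo_val side (unpair2 k) \<and> box_hi_val side (unpair2 k) < rat_val (ivl_hi (unpair1 k)) \<and> misses_A (unpair1 k)"

lemma eventually_certifies: "eventually (\<lambda>s. certifies p s side k = Cert side k) sequentially"
proof -
  have "eventually (\<lambda>s. dist_upper p s \<noteq> 0 \<and> dist_floor p s (unpair2 k) = d_floor (unpair2 k) \<and> (no_sub_enum p s (unpair1 k) \<noteq> 0) = misses_A (unpair1 k)) sequentially"
    using eventually_dist_upper_nonzero eventually_dist_floor eventually_no_sub_enum by (intro eventually_conj)
  then show ?thesis
    by (rule eventually_mono) (simp add: certifies_def Cert_def rat_less_iff rat_val_box_lo rat_val_box_hi)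
qed

definition First_Cert :: "nat \<Rightarrow> nat \<Rightarrow> bool" where
  "First_Cert side k \<longleftrightarrow> Cert side k \<and> (\<forall>k'<k. \<not> Cert side k')"

lemma eventually_first_cert: "eventually (\<lambda>s. first_cert p s side k = of_bool (First_Cert side k)) sequentially"
proof -
  have "eventually (\<lambda>s. \<forall>k'\<in>{..k}. certifies p s side k' = Cert side k') sequentially"
    by (rule eventually_ball_finite) (auto intro: eventually_certifies)
  then show ?thesis
    by (rule eventually_mono) (auto simp: first_cert_def First_Cert_def no_cert_before_iff)
qed

definition cand_code_lim :: "nat \<Rightarrow> nat \<Rightarrow> nat" where
  "cand_code_lim side m = code_of_rat (if side = 0 then rat_diff (approx_x p (Suc m)) (dyadic (d_floor (Suc m)) (Suc m))
                             else rat_add (approx_x p (Suc m)) (dyadic (d_floor (Suc m)) (Suc m)))"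

lemma eventually_cand_code: "eventually (\<lambda>s. cand_code p s side m = cand_code_lim side m) sequentially"
  using eventually_dist_floor[of "Suc m"] by (rule eventually_mono) (simp add: cand_code_def cand_code_lim_def)

definition stage_lim :: "nat \<Rightarrow> nat" where
  "stage_lim j = (if unpair1 j = 0 then of_bool (First_Cert 0 (unpair2 j)) else if unpair1 j = 1 then of_bool (First_Cert 1 (unpair2 j))
       else if unpair1 j = 2 then cand_code_lim 0 (unpair2 j) else if unpair1 j = 3 then cand_code_lim 1 (unpair2 j) else 0)"

lemma eventually_stage: "eventually (\<lambda>s. stage p s j = stage_lim j) sequentially"
proof -
  have "eventually (\<lambda>s. first_cert p s 0 (unpair2 j) = of_bool (First_Cert 0 (unpair2 j)) \<and> first_cert p s 1 (unpair2 j) = of_bool (First_Cert 1 (unpair2 j))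
      \<and> cand_code p s 0 (unpair2 j) = cand_code_lim 0 (unpair2 j) \<and> cand_code p s 1 (unpair2 j) = cand_code_lim 1 (unpair2 j)) sequentially"
    by (intro eventually_conj eventually_first_cert eventually_cand_code)
  then show ?thesis
    by (rule eventually_mono) (simp add: stage_def stage_lim_def)
qed

lemma baire_lim_stage: "baire_lim (\<lambda>i j. stage p i j) = {stage_lim}"
  by (rule baire_lim_eventually_eq) (rule eventually_stage)

definition candidate :: "nat \<Rightarrow> real" where "candidate side = (if side = 0 then x - d else x + d)"

lemma approx_bounds:
  "x_val n \<le> x + tol n" "x - tol n \<le> x_val n" "real (d_floor n) * tol n \<le> d" "d < real (d_floor n) * tol n + tol n"
  using approx_x_close[of n] d_floor_bounds'[of n] unfolding x_val_def tol_def by (auto simp: algebra_simps)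

lemma box_brackets_candidate:
  "box_lo_val side n \<le> candidate side \<and> candidate side \<le> box_hi_val side n \<and> candidate side - 3 * tol n \<le> box_lo_val side n \<and> box_hi_val side n \<le> candidate side + 3 * tol n"
proof (cases "side = 0")
  case True
  have l: "box_lo_val side n = x_val n - real (d_floor n) * tol n - 2 * tol n" "box_hi_val side n = x_val n + tol n - real (d_floor n) * tol n"
      "candidate side = x - d"
    using True by (simp_all add: box_lo_val_def box_hi_val_def candidate_def ring_distribs)
  show ?thesis unfolding l using approx_bounds[of n] by linarith
next
  case False
  have l: "box_lo_val side n = x_val n + real (d_floor n) * tol n - tol n" "box_hi_val side n = x_val n + real (d_floor n) * tol n + 2 * tol n"
      "candidate side = x + d"
    using False by (simp_all add: box_lo_val_def box_hi_val_def candidate_def ring_distribs)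
  show ?thesis unfolding l using approx_bounds[of n] by linarith
qed

lemma Cert_misses: "Cert side k \<Longrightarrow> candidate side \<notin> A"
  using box_brackets_candidate[of side "unpair2 k"] unfolding Cert_def misses_A_def by force

lemma Cert_exists:
  assumes "candidate side \<notin> A"
  shows "\<exists>k. Cert side k"
proof -
  let ?c = "candidate side"
  have "open (- A)" using A_closed by (simp add: open_Compl)
  then obtain e where e: "0 < e" "\<And>y. dist y ?c < e \<Longrightarrow> y \<in> - A"
    using assms unfolding open_dist by blast
  obtain a where a: "a \<in> \<rat>" "?c - e < a" "a < ?c - e/2" using Rats_dense_in_real[of "?c - e" "?c - e/2"] e by auto
  obtain b where b: "b \<in> \<rat>" "?c + e/2 < b" "b < ?c + e" using Rats_dense_in_real[of "?c + e/2" "?c + e"] e by auto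
  obtain n where n: "(1/2::real) ^ n < e / 6" using half_pow_less[of "e/6"] e by auto
  obtain cc where cc: "rat_val (ivl_lo cc) = a" "rat_val (ivl_hi cc) = b" using ivl_code_exists[OF a(1) b(1)] by blast
  have br: "?c - 3 * tol n \<le> box_lo_val side n" "box_hi_val side n \<le> ?c + 3 * tol n" using box_brackets_candidate[of side n] by auto
  have hn: "tol n < e / 6" using n by (simp add: tol_def)
  have fr: "misses_A cc"
    unfolding misses_A_def
  proof
    fix y assume "y \<in> A"
    then have nd: "\<not> dist y ?c < e" using e(2) by blast
    show "\<not> (rat_val (ivl_lo cc) < y \<and> y < rat_val (ivl_hi cc))"
    proof
      assume "rat_val (ivl_lo cc) < y \<and> y < rat_val (ivl_hi cc)"
      then have "-e < y - ?c" "y - ?c < e" using cc a b by linarith+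
      then have "dist y ?c < e" by (simp add: dist_real_def abs_less_iff)
      then show False using nd by blast
    qed
  qed
  have "Cert side (prod_encode (cc, n))"
    unfolding Cert_def using cc a b br hn fr by simp
  then show ?thesis by blast
qed

lemma candidate_in_A: "candidate 0 \<in> A \<or> candidate 1 \<in> A"
proof -
  obtain y where y: "y \<in> A" "\<bar>x - y\<bar> = d" using nearest by blast
  then have "y = x - d \<or> y = x + d" by (auto simp: abs_if split: if_splits)
  then show ?thesis using y by (auto simp: candidate_def)
qed

lemma First_Cert_not_both: "First_Cert 0 k \<Longrightarrow> First_Cert 1 k' \<Longrightarrow> False"
  using candidate_in_A Cert_misses unfolding First_Cert_def by blast

lemma First_Cert_unique: "First_Cert s k \<Longrightarrow> First_Cert s k' \<Longrightarrow> k = k'"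
  unfolding First_Cert_def by (metis linorder_neqE_nat)

lemma candidate_in_A_if_no_First_Cert:
  assumes "\<And>k. \<not> First_Cert side k"
  shows "candidate side \<in> A"
proof (rule ccontr)
  assume "candidate side \<notin> A"
  then obtain k where k: "Cert side k" using Cert_exists by blast
  let ?k0 = "LEAST k. Cert side k"
  have "First_Cert side ?k0" unfolding First_Cert_def
    using LeastI[of "Cert side", OF k] not_less_Least[of _ "Cert side"] by blast
  then show False using assms by blast
qed

lemma cand_code_lim_close: "\<bar>real_of_code (cand_code_lim side m) - candidate side\<bar> \<le> (1/2) ^ m"
proof -
  have h: "tol (Suc m) = (1/2) ^ m / 2" by (simp add: tol_def)
  have r: "real_of_code (cand_code_lim side m) = (if side = 0 then x_val (Suc m) - real (d_floor (Suc m)) * tol (Suc m)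
            else x_val (Suc m) + real (d_floor (Suc m)) * tol (Suc m))"
    by (simp add: cand_code_lim_def x_val_def rat_val_dyadic_tol del: rat_val_dyadic)
  have b: "x_val (Suc m) \<le> x + (1/2) ^ m / 2" "x - (1/2) ^ m / 2 \<le> x_val (Suc m)"
    "real (d_floor (Suc m)) * tol (Suc m) \<le> d" "d < real (d_floor (Suc m)) * tol (Suc m) + (1/2) ^ m / 2"
    using approx_bounds[of "Suc m"] unfolding h by simp_all
  show ?thesis
  proof (cases "side = 0")
    case True
    then have e: "real_of_code (cand_code_lim side m) - candidate side = (x_val (Suc m) - x) + (d - real (d_floor (Suc m)) * tol (Suc m))"
      unfolding r by (simp add: candidate_def)
    show ?thesis unfolding e using b by (simp add: abs_le_iff)
  next
    case False
    then have e: "real_of_code (cand_code_lim side m) - candidate side = (x_val (Suc m) - x) - (d - real (d_floor (Suc m)) * tol (Suc m))"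
      unfolding r by (simp add: candidate_def)
    show ?thesis unfolding e using b by (simp add: abs_le_iff)
  qed
qed

end


section \<open>The reductions\<close>

definition id_assoc :: "nat \<Rightarrow> nat" where "id_assoc = std_assoc Suc (\<lambda>n c. code_nth c n)"
definition snd_assoc :: "nat \<Rightarrow> nat" where "snd_assoc = std_assoc (\<lambda>n. 2 * n + 2) (\<lambda>n c. code_nth c (2 * n + 1))"
definition select_pre_assoc :: "nat \<Rightarrow> nat" where
  "select_pre_assoc = std_assoc (\<lambda>n. Suc (pair_code (n mod 2) (n div 2))) (\<lambda>n c. code_nth c (pair_code (n mod 2) (n div 2)))"
definition select_post_assoc :: "nat \<Rightarrow> nat" where
  "select_post_assoc = std_assoc (\<lambda>n. 2 * pair_code 3 n + 2) (\<lambda>n c. if code_nth c 1 = 0 then code_nth c (2 * pair_code 2 n) else code_nth c (2 * pair_code 3 n))"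

lemma computable_id_assoc: "computable_nat id_assoc"
  unfolding id_assoc_def
  by (rule computable_std_assoc; rule rec1I[where e="ESuc (EVar 0)"] rec2I[where e="call2 code_nth (EVar 1) (EVar 0)"])
     (simp_all add: rec2_code_nth)

lemma computable_snd_assoc: "computable_nat snd_assoc"
  unfolding snd_assoc_def
  by (rule computable_std_assoc; rule rec1I[where e="call2 (+) (call2 (*) (EConst 2) (EVar 0)) (EConst 2)"]
        rec2I[where e="call2 code_nth (EVar 1) (ESuc (call2 (*) (EConst 2) (EVar 0)))"])
     (simp_all add: rec2_code_nth rec_basic)

lemma computable_select_pre_assoc: "computable_nat select_pre_assoc"
  unfolding select_pre_assoc_def
  by (rule computable_std_assoc; rule rec1I[where e="ESuc (call2 pair_code (call1 (\<lambda>x. x mod 2) (EVar 0)) (call1 (\<lambda>x. x div 2) (EVar 0)))"]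
        rec2I[where e="call2 code_nth (EVar 1) (call2 pair_code (call1 (\<lambda>x. x mod 2) (EVar 0)) (call1 (\<lambda>x. x div 2) (EVar 0)))"])
     (simp_all add: rec2_code_nth rec2_pair_code rec1_mod2 rec1_div2)

lemma computable_select_post_assoc: "computable_nat select_post_assoc"
  unfolding select_post_assoc_def
  by (rule computable_std_assoc; rule rec1I[where e="call2 (+) (call2 (*) (EConst 2) (call2 pair_code (EConst 3) (EVar 0))) (EConst 2)"]
        rec2I[where e="call3 cond (call2 eq_ind (call2 code_nth (EVar 1) (EConst 1)) (EConst 0))
             (call2 code_nth (EVar 1) (call2 (*) (EConst 2) (call2 pair_code (EConst 2) (EVar 0))))
             (call2 code_nth (EVar 1) (call2 (*) (EConst 2) (call2 pair_code (EConst 3) (EVar 0))))"])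
     (simp_all add: rec2_code_nth rec2_pair_code rec_basic ind_defs)

lemma tt_id_assoc: "tt_apply id_assoc p = Some p"
  unfolding id_assoc_def tt_apply_std_assoc by (simp add: code_nth_prefix del: upt_Suc)

lemma tt_snd_assoc: "tt_apply snd_assoc r = Some (\<lambda>n. r (2 * n + 1))"
  unfolding snd_assoc_def tt_apply_std_assoc by (simp add: code_nth_prefix del: upt_Suc)

lemma bpair_odd [simp]: "bpair p q (2 * n + 1) = q n" and bpair_even [simp]: "bpair p q (2 * n) = p n"
  and bpair_odd' [simp]: "bpair p q (Suc (2 * n)) = q n" and bpair_1: "bpair p q 1 = q 0"
  by (simp_all add: bpair_def)

lemma tt_select_pre_assoc: "tt_apply select_pre_assoc w = Some (\<lambda>n. w (pair_code (n mod 2) (n div 2)))"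
  unfolding select_pre_assoc_def tt_apply_std_assoc by (simp add: code_nth_prefix del: upt_Suc)

lemma pair_code_2_less_3: "pair_code 2 n < pair_code 3 n"
proof -
  have e: "3 + n = Suc (2 + n)" by simp
  have "triangle (3 + n) = triangle (2 + n) + Suc (2 + n)" unfolding e by (rule triangle_Suc)
  then show ?thesis by (simp add: pair_code_def prod_encode_def)
qed

lemma tt_select_post_assoc:
  "tt_apply select_post_assoc r =
     Some (\<lambda>n. if r 1 = 0 then r (2 * pair_code 2 n) else r (2 * pair_code 3 n))"
  unfolding select_post_assoc_def tt_apply_std_assoc
proof (intro arg_cong[where f=Some] ext)
  fix n
  let ?c = "list_encode (map r [0..<2 * pair_code 3 n + 2])"
  have "code_nth ?c 1 = r 1" "code_nth ?c (2 * pair_code 2 n) = r (2 * pair_code 2 n)"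
    "code_nth ?c (2 * pair_code 3 n) = r (2 * pair_code 3 n)"
    using pair_code_2_less_3[of n] by (intro code_nth_prefix; simp)+
  then show "(if code_nth ?c 1 = 0 then code_nth ?c (2 * pair_code 2 n) else code_nth ?c (2 * pair_code 3 n)) =
      (if r 1 = 0 then r (2 * pair_code 2 n) else r (2 * pair_code 3 n))"
    by (simp only:)
qed

lemma llpo_of_bool:
  assumes "\<And>i k i' k'. i < 2 \<Longrightarrow> i' < 2 \<Longrightarrow> P i k \<Longrightarrow> P i' k' \<Longrightarrow> i = i' \<and> k = k'"
  shows "llpo (\<lambda>n. of_bool (P 0 n), \<lambda>n. of_bool (P 1 n)) = {i. i < 2 \<and> (\<forall>k. \<not> P i k)}"
proof -
  let ?q = "[\<lambda>n. of_bool (P 0 n), \<lambda>n. of_bool (P 1 n)] :: baire list"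
  have row: "(?q ! i) k = 0 \<longleftrightarrow> \<not> P i k" if "i < 2" for i k
    using that by (auto simp: less_2_cases_iff)
  have "\<forall>j m j' m'. j < 2 \<and> j' < 2 \<and> (?q ! j) m \<noteq> 0 \<and> (?q ! j') m' \<noteq> 0 \<longrightarrow> j = j' \<and> m = m'"
    using assms row by meson
  then have "llpo (\<lambda>n. of_bool (P 0 n), \<lambda>n. of_bool (P 1 n)) = {i. i < 2 \<and> ?q ! i = (\<lambda>_. 0)}"
    unfolding llpo_def prod.case by (rule if_P)
  also have "\<dots> = {i. i < 2 \<and> (\<forall>k. \<not> P i k)}"
    using row unfolding fun_eq_iff by blast
  finally show ?thesis .
qed

definition llpo_select :: "baire \<Rightarrow> baire set" where
  "llpo_select w = {r. \<exists>i\<in>llpo (\<lambda>n. w (pair_code 0 n), \<lambda>n. w (pair_code 1 n)).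
               r = (\<lambda>n. if i = 0 then w (pair_code 2 n) else w (pair_code 3 n))}"

definition stage_lim_problem :: "baire \<Rightarrow> baire set" where
  "stage_lim_problem p = baire_lim (\<lambda>i j. stage p i j)"

lemma llpo_select_le_llpo: "weihrauch_le Some Some llpo_select (rep_prod Some Some) nat_rep llpo"
  unfolding weihrauch_le_def
proof (rule exI[of _ select_pre_assoc], rule exI[of _ select_post_assoc], intro conjI allI impI)
  show "computable_nat select_pre_assoc" by (rule computable_select_pre_assoc)
  show "computable_nat select_post_assoc" by (rule computable_select_post_assoc)
  fix G w w' assume G: "realizes (rep_prod Some Some) nat_rep llpo G"
    and ww: "Some w = Some w'" and ne: "llpo_select w' \<noteq> {}"
  then have w': "w' = w" by simp
  let ?q = "\<lambda>n. w (pair_code (n mod 2) (n div 2))"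
  have rp: "rep_prod Some Some ?q = Some ((\<lambda>n. w (pair_code 0 n)), (\<lambda>n. w (pair_code 1 n)))"
    by (simp add: rep_prod_def)
  have ll: "llpo (\<lambda>n. w (pair_code 0 n), \<lambda>n. w (pair_code 1 n)) \<noteq> {}" using ne w' by (auto simp: llpo_select_def)
  obtain y where y: "nat_rep (G ?q) = Some y" "y \<in> llpo (\<lambda>n. w (pair_code 0 n), \<lambda>n. w (pair_code 1 n))"
    using G rp ll unfolding realizes_def by blast
  have y0: "G ?q 0 = y" using y(1) by (simp add: nat_rep_def)
  let ?r = "\<lambda>n. if G ?q 0 = 0 then w (pair_code 2 n) else w (pair_code 3 n)"
  have "tt_apply select_post_assoc (bpair w (G ?q)) = Some ?r"
    unfolding tt_select_post_assoc by (simp only: bpair_1 bpair_even)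
  moreover have "?r \<in> llpo_select w'" unfolding llpo_select_def w' using y y0 by auto
  ultimately show "\<exists>q r. tt_apply select_pre_assoc w = Some q \<and> tt_apply select_post_assoc (bpair w (G q)) = Some r \<and>
      (\<exists>y. Some r = Some y \<and> y \<in> llpo_select w')"
    unfolding tt_select_pre_assoc by blast
qed

lemma stage_lim_problem_le_lim: "weihrauch_le Some Some stage_lim_problem seq_rep Some baire_lim"
  unfolding weihrauch_le_def
proof (rule exI[of _ stage_assoc], rule exI[of _ snd_assoc], intro conjI allI impI)
  show "computable_nat stage_assoc" by (rule computable_stage_assoc)
  show "computable_nat snd_assoc" by (rule computable_snd_assoc)
  fix G p p' assume G: "realizes seq_rep Some baire_lim G"
    and pp: "Some p = Some p'" and ne: "stage_lim_problem p' \<noteq> {}"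
  then have p': "p' = p" by simp
  let ?q = "\<lambda>n. stage p (unpair1 n) (unpair2 n)"
  have sr: "seq_rep ?q = Some (\<lambda>i j. stage p i j)" by (simp add: seq_rep_def)
  have "baire_lim (\<lambda>i j. stage p i j) \<noteq> {}" using ne p' by (simp add: stage_lim_problem_def)
  then obtain y where "Some (G ?q) = Some y" "y \<in> baire_lim (\<lambda>i j. stage p i j)"
    using G sr unfolding realizes_def by blast
  then have "G ?q \<in> stage_lim_problem p'" using p' by (simp add: stage_lim_problem_def)
  moreover have "tt_apply snd_assoc (bpair p (G ?q)) = Some (G ?q)" unfolding tt_snd_assoc by simp
  ultimately show "\<exists>q r. tt_apply stage_assoc p = Some q \<and> tt_apply snd_assoc (bpair p (G q)) = Some r \<and>
      (\<exists>y. Some r = Some y \<and> y \<in> stage_lim_problem p')"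
    unfolding tt_stage_assoc by blast
qed

context proj_instance
begin

lemma stage_lim_pair_code:
  "stage_lim (pair_code 0 n) = of_bool (First_Cert 0 n)" "stage_lim (pair_code 1 n) = of_bool (First_Cert 1 n)"
  "stage_lim (pair_code 2 n) = cand_code_lim 0 n" "stage_lim (pair_code 3 n) = cand_code_lim 1 n"
  by (simp_all add: stage_lim_def)

lemma llpo_First_Cert:
  "llpo (\<lambda>n. of_bool (First_Cert 0 n), \<lambda>n. of_bool (First_Cert 1 n)) = {i. i < 2 \<and> (\<forall>k. \<not> First_Cert i k)}"
  by (rule llpo_of_bool) (auto simp: less_2_cases_iff dest: First_Cert_not_both First_Cert_unique)

lemma llpo_select_stage_lim:
  "llpo_select stage_lim = {cand_code_lim i | i. i < 2 \<and> (\<forall>k. \<not> First_Cert i k)}"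
proof -
  have "llpo_select stage_lim = {r. \<exists>i\<in>llpo (\<lambda>n. of_bool (First_Cert 0 n), \<lambda>n. of_bool (First_Cert 1 n)).
      r = (\<lambda>n. if i = 0 then cand_code_lim 0 n else cand_code_lim 1 n)}"
    unfolding llpo_select_def stage_lim_pair_code ..
  also have "\<dots> = {cand_code_lim i | i. i < 2 \<and> (\<forall>k. \<not> First_Cert i k)}"
  proof -
    have "(\<lambda>n. if i = 0 then cand_code_lim 0 n else cand_code_lim 1 n) = cand_code_lim i" if "i < 2" for i
      using that by (auto simp: less_2_cases_iff)
    then show ?thesis
      unfolding llpo_First_Cert by auto
  qed
  finally show ?thesis .
qed

lemma llpo_select_stage_lim_nonempty: "llpo_select stage_lim \<noteq> {}"
proof -
  have "(\<forall>k. \<not> First_Cert 0 k) \<or> (\<forall>k. \<not> First_Cert 1 k)"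
    using First_Cert_not_both by blast
  then have "cand_code_lim 0 \<in> llpo_select stage_lim \<or> cand_code_lim 1 \<in> llpo_select stage_lim"
    unfolding llpo_select_stage_lim by fastforce
  then show ?thesis by blast
qed

lemma llpo_select_stage_lim_sound:
  assumes "r \<in> llpo_select stage_lim"
  shows "\<exists>y. cauchy_rep r = Some y \<and> y \<in> proj_plus (x, A)"
proof -
  obtain i where i: "\<forall>k. \<not> First_Cert i k" and r: "r = cand_code_lim i"
    using assms unfolding llpo_select_stage_lim by blast
  have "cauchy_rep r = Some (candidate i)"
    unfolding r by (rule cauchy_rep_intro) (rule cand_code_lim_close)
  moreover have "candidate i \<in> A"
    using candidate_in_A_if_no_First_Cert i by blast
  moreover have "\<bar>x - candidate i\<bar> = d"
    using d_nonneg by (simp add: candidate_def)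
  ultimately show ?thesis
    using A_closed A_nonempty by (auto simp: proj_plus_def d_def)
qed

lemma mv_comp_llpo_select_stage_lim_problem:
  "mv_comp llpo_select stage_lim_problem p = llpo_select stage_lim"
  using llpo_select_stage_lim_nonempty
  unfolding mv_comp_def stage_lim_problem_def baire_lim_stage by simp

end

lemma proj_plus_le_comp:
  "weihrauch_le (rep_prod cauchy_rep closed_pos_rep) cauchy_rep proj_plus Some Some
     (mv_comp llpo_select stage_lim_problem)"
  unfolding weihrauch_le_def
proof (rule exI[of _ id_assoc], rule exI[of _ snd_assoc], intro conjI allI impI)
  show "computable_nat id_assoc" by (rule computable_id_assoc)
  show "computable_nat snd_assoc" by (rule computable_snd_assoc)
  fix G p xA assume G: "realizes Some Some (mv_comp llpo_select stage_lim_problem) G"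
    and rp: "rep_prod cauchy_rep closed_pos_rep p = Some xA" and ne: "proj_plus xA \<noteq> {}"
  obtain x A where xA: "xA = (x, A)" by (cases xA)
  have cx: "cauchy_rep (\<lambda>n. p (2 * n)) = Some x" and cA: "closed_pos_rep (\<lambda>n. p (2 * n + 1)) = Some A"
    using rp unfolding xA rep_prod_def by (auto split: option.splits)
  have "A \<noteq> {}" using ne unfolding xA proj_plus_def by (auto split: if_splits)
  then interpret proj_instance p x A
    by unfold_locales (use cauchy_rep_elim[OF cx] closed_pos_rep_elim[OF cA] in auto)
  have "G p \<in> llpo_select stage_lim"
    using G[unfolded realizes_def, rule_format, of p p] llpo_select_stage_lim_nonempty
    by (simp add: mv_comp_llpo_select_stage_lim_problem)
  then obtain y where "cauchy_rep (G p) = Some y" "y \<in> proj_plus (x, A)"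
    using llpo_select_stage_lim_sound by blast
  then show "\<exists>q r. tt_apply id_assoc p = Some q \<and> tt_apply snd_assoc (bpair p (G q)) = Some r \<and>
      (\<exists>y. cauchy_rep r = Some y \<and> y \<in> proj_plus xA)"
    unfolding tt_id_assoc tt_snd_assoc xA by (simp add: bpair_def)
qed

theorem proposition4p16:
  shows "weihrauch_le_cprod
           (rep_prod cauchy_rep closed_pos_rep) cauchy_rep proj_plus
           (rep_prod Some Some) nat_rep llpo
           seq_rep Some baire_lim"
  unfolding weihrauch_le_cprod_def
  using llpo_select_le_llpo stage_lim_problem_le_lim proj_plus_le_comp by blast

end
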